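(* There is an isomorphism of categories between $\mathsf{CSet}\text{-}\mathsf{Cat}$ and $\mathsf{Cat}^{\mathsf{D}}$.
   Context: Convex sets: algebras $(X,\pi^X:D(X)\to X)$ over the distribution monad $D$ on $\mathsf{Set}$ over $\mathbb{R}_{\ge0}$ ($D(X)$ = finitely supported $p:X\to\mathbb{R}_{\ge0}$ with $\sum p(x)=1$, $D(f)$ pushforward, multiplication $\mu(P)(x)=\sum_qP(q)q(x)$, unit Dirac delta); write $\sum_i\alpha_ix_i$ for $\pi^X$ of a formal convex combination; $\mathsf{CSet}$ is the category of convex sets and convex maps. For convex sets $X,Y,Z$, a map $f:X\times Y\to Z$ is biconvex if $f(\sum_i\alpha_ix_i,\sum_j\beta_jy_j)=\sum_{i,j}\alpha_i\beta_jf(x_i,y_j)$. The convex tensor product $X\otimes Y$ is the convex set corepresenting biconvex maps out of $X\times Y$ (via $(x,y)\mapsto x\otimes y$); $(\mathsf{CSet},\otimes,\mathbf{1})$ is a symmetric monoidal category with unit the one-point convex set. $\mathsf{CSet}\text{-}\mathsf{Cat}$ is the category of small categories enriched in $(\mathsf{CSet},\otimes,\mathbf{1})$ and enriched functors. $\mathsf{Cat}^{\mathsf{D}}$ is the category of algebras over the distribution monad $\mathsf{D}$ on $\mathsf{Cat}$ of Kharoof–Okay; concretely, an object is a small category together with a convex-set structure on each hom-set such that the composition maps are biconvex, and a morphism is a functor that preserves the convex structure on hom-sets. *)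

theory Defs
  imports Complex_Main "HOL-Library.FuncSet"
begin

section \<open>The finite distribution monad D on Set (over nonnegative reals)\<close>

definition supp :: "('x \<Rightarrow> real) \<Rightarrow> 'x set" where
  "supp p = {x. p x \<noteq> 0}"

definition Dist :: "'x set \<Rightarrow> ('x \<Rightarrow> real) set" where
  "Dist A = {p. (\<forall>x. 0 \<le> p x) \<and> finite (supp p) \<and> supp p \<subseteq> A \<and> sum p (supp p) = 1}"

definition delta :: "'x \<Rightarrow> 'x \<Rightarrow> real" where
  "delta x = (\<lambda>y. if y = x then 1 else 0)"

definition Dmap :: "('x \<Rightarrow> 'y) \<Rightarrow> ('x \<Rightarrow> real) \<Rightarrow> ('y \<Rightarrow> real)" where
  "Dmap f p = (\<lambda>y. \<Sum>x\<in>supp p. if f x = y then p x else 0)"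

definition Dmu :: "(('x \<Rightarrow> real) \<Rightarrow> real) \<Rightarrow> ('x \<Rightarrow> real)" where
  "Dmu P = (\<lambda>x. \<Sum>q\<in>supp P. P q * q x)"

section \<open>Convex sets (D-algebras), convex and biconvex maps\<close>

record 'x cset =
  carr :: "'x set"
  bary :: "('x \<Rightarrow> real) \<Rightarrow> 'x"

definition convex_set :: "'x cset \<Rightarrow> bool" where
  "convex_set X \<longleftrightarrow>
     (\<forall>p\<in>Dist (carr X). bary X p \<in> carr X) \<and>
     (\<forall>x\<in>carr X. bary X (delta x) = x) \<and>
     (\<forall>P\<in>Dist (Dist (carr X)). bary X (Dmu P) = bary X (Dmap (bary X) P))"

definition convex_map :: "'x cset \<Rightarrow> 'y cset \<Rightarrow> ('x \<Rightarrow> 'y) \<Rightarrow> bool" where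
  "convex_map X Y f \<longleftrightarrow>
     (\<forall>x\<in>carr X. f x \<in> carr Y) \<and>
     (\<forall>p\<in>Dist (carr X). f (bary X p) = bary Y (Dmap f p))"

definition prodist :: "('x \<Rightarrow> real) \<Rightarrow> ('y \<Rightarrow> real) \<Rightarrow> ('x \<times> 'y \<Rightarrow> real)" where
  "prodist p q = (\<lambda>(x, y). p x * q y)"

definition biconvex :: "'x cset \<Rightarrow> 'y cset \<Rightarrow> 'z cset \<Rightarrow> ('x \<Rightarrow> 'y \<Rightarrow> 'z) \<Rightarrow> bool" where
  "biconvex X Y Z f \<longleftrightarrow>
     (\<forall>x\<in>carr X. \<forall>y\<in>carr Y. f x y \<in> carr Z) \<and>
     (\<forall>p\<in>Dist (carr X). \<forall>q\<in>Dist (carr Y).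
        f (bary X p) (bary Y q) = bary Z (Dmap (\<lambda>(x, y). f x y) (prodist p q)))"

text \<open>Congruences of a D-algebra (kernels of algebra maps).\<close>
definition cset_congruence :: "'x cset \<Rightarrow> ('x \<times> 'x) set \<Rightarrow> bool" where
  "cset_congruence X R \<longleftrightarrow> equiv (carr X) R \<and>
     (\<forall>P\<in>Dist (carr X). \<forall>Q\<in>Dist (carr X).
        Dmap (\<lambda>x. R `` {x}) P = Dmap (\<lambda>x. R `` {x}) Q \<longrightarrow> (bary X P, bary X Q) \<in> R)"

definition free_cset :: "'x set \<Rightarrow> ('x \<Rightarrow> real) cset" where
  "free_cset A = \<lparr>carr = Dist A, bary = Dmu\<rparr>"

definition tensor_gens :: "'x cset \<Rightarrow> 'y cset \<Rightarrow> (('x \<times> 'y \<Rightarrow> real) \<times> ('x \<times> 'y \<Rightarrow> real)) set" where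
  "tensor_gens X Y =
     {(delta (bary X p, y), Dmap (\<lambda>x. (x, y)) p) | p y. p \<in> Dist (carr X) \<and> y \<in> carr Y} \<union>
     {(delta (x, bary Y q), Dmap (\<lambda>y. (x, y)) q) | x q. x \<in> carr X \<and> q \<in> Dist (carr Y)}"

text \<open>Smallest congruence on D(X x Y) making (x,y) |-> [delta(x,y)] biconvex.\<close>
definition tensor_rel :: "'x cset \<Rightarrow> 'y cset \<Rightarrow> (('x \<times> 'y \<Rightarrow> real) \<times> ('x \<times> 'y \<Rightarrow> real)) set" where
  "tensor_rel X Y = \<Inter>{R. cset_congruence (free_cset (carr X \<times> carr Y)) R \<and> tensor_gens X Y \<subseteq> R}"

definition tensor :: "'x cset \<Rightarrow> 'y cset \<Rightarrow> (('x \<times> 'y \<Rightarrow> real) set) cset" where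
  "tensor X Y = \<lparr>carr = Dist (carr X \<times> carr Y) // tensor_rel X Y,
                 bary = (\<lambda>P. tensor_rel X Y `` {Dmu (Dmap (\<lambda>c. SOME q. q \<in> c) P)})\<rparr>"

definition tens :: "'x cset \<Rightarrow> 'y cset \<Rightarrow> 'x \<Rightarrow> 'y \<Rightarrow> ('x \<times> 'y \<Rightarrow> real) set" where
  "tens X Y x y = tensor_rel X Y `` {delta (x, y)}"

definition unitC :: "unit cset" where
  "unitC = \<lparr>carr = {()}, bary = (\<lambda>_. ())\<rparr>"

definition idm :: "'x cset \<Rightarrow> 'x \<Rightarrow> 'x" where
  "idm X = restrict id (carr X)"

definition tmap :: "'a cset \<Rightarrow> 'b cset \<Rightarrow> 'c cset \<Rightarrow> 'd cset \<Rightarrow> ('a \<Rightarrow> 'c) \<Rightarrow> ('b \<Rightarrow> 'd)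
    \<Rightarrow> ('a \<times> 'b \<Rightarrow> real) set \<Rightarrow> ('c \<times> 'd \<Rightarrow> real) set" where
  "tmap X Y X' Y' f g = (THE h. h \<in> extensional (carr (tensor X Y)) \<and>
      convex_map (tensor X Y) (tensor X' Y') h \<and>
      (\<forall>x\<in>carr X. \<forall>y\<in>carr Y. h (tens X Y x y) = tens X' Y' (f x) (g y)))"

definition assocm :: "'a cset \<Rightarrow> 'b cset \<Rightarrow> 'c cset
    \<Rightarrow> (('a \<times> 'b \<Rightarrow> real) set \<times> 'c \<Rightarrow> real) set \<Rightarrow> ('a \<times> ('b \<times> 'c \<Rightarrow> real) set \<Rightarrow> real) set" where
  "assocm X Y Z = (THE h. h \<in> extensional (carr (tensor (tensor X Y) Z)) \<and>
      convex_map (tensor (tensor X Y) Z) (tensor X (tensor Y Z)) h \<and>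
      (\<forall>x\<in>carr X. \<forall>y\<in>carr Y. \<forall>z\<in>carr Z.
         h (tens (tensor X Y) Z (tens X Y x y) z) = tens X (tensor Y Z) x (tens Y Z y z)))"

definition lunit :: "'a cset \<Rightarrow> (unit \<times> 'a \<Rightarrow> real) set \<Rightarrow> 'a" where
  "lunit X = (THE h. h \<in> extensional (carr (tensor unitC X)) \<and>
      convex_map (tensor unitC X) X h \<and> (\<forall>x\<in>carr X. h (tens unitC X () x) = x))"

definition runit :: "'a cset \<Rightarrow> ('a \<times> unit \<Rightarrow> real) set \<Rightarrow> 'a" where
  "runit X = (THE h. h \<in> extensional (carr (tensor X unitC)) \<and>
      convex_map (tensor X unitC) X h \<and> (\<forall>x\<in>carr X. h (tens X unitC x ()) = x))"

record ('o, 'h) ecat =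
  eOb :: "'o set"
  eHom :: "'o \<Rightarrow> 'o \<Rightarrow> 'h set"
  eBary :: "'o \<Rightarrow> 'o \<Rightarrow> ('h \<Rightarrow> real) \<Rightarrow> 'h"
  eM :: "'o \<Rightarrow> 'o \<Rightarrow> 'o \<Rightarrow> ('h \<times> 'h \<Rightarrow> real) set \<Rightarrow> 'h"  \<comment> \<open>M_abc : C(b,c) (x) C(a,b) -> C(a,c)\<close>
  eJ :: "'o \<Rightarrow> unit \<Rightarrow> 'h"                               \<comment> \<open>j_a : 1 -> C(a,a)\<close>

definition ehom :: "('o, 'h, 'z) ecat_scheme \<Rightarrow> 'o \<Rightarrow> 'o \<Rightarrow> 'h cset" where
  "ehom E a b = \<lparr>carr = eHom E a b, bary = eBary E a b\<rparr>"

definition is_ecat :: "('o, 'h) ecat \<Rightarrow> bool" where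
  "is_ecat E \<longleftrightarrow>
    (\<forall>a\<in>eOb E. \<forall>b\<in>eOb E. convex_set (ehom E a b)) \<and>
    (\<forall>a\<in>eOb E. \<forall>b\<in>eOb E. \<forall>c\<in>eOb E.
        convex_map (tensor (ehom E b c) (ehom E a b)) (ehom E a c) (eM E a b c)) \<and>
    (\<forall>a\<in>eOb E. convex_map unitC (ehom E a a) (eJ E a)) \<and>
    \<comment> \<open>associativity: M o (M (x) 1) = M o (1 (x) M) o alpha\<close>
    (\<forall>a\<in>eOb E. \<forall>b\<in>eOb E. \<forall>c\<in>eOb E. \<forall>d\<in>eOb E.
       \<forall>t\<in>carr (tensor (tensor (ehom E c d) (ehom E b c)) (ehom E a b)).
         eM E a b d (tmap (tensor (ehom E c d) (ehom E b c)) (ehom E a b) (ehom E b d) (ehom E a b)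
                        (eM E b c d) (idm (ehom E a b)) t)
       = eM E a c d (tmap (ehom E c d) (tensor (ehom E b c) (ehom E a b)) (ehom E c d) (ehom E a c)
                        (idm (ehom E c d)) (eM E a b c)
                        (assocm (ehom E c d) (ehom E b c) (ehom E a b) t))) \<and>
    \<comment> \<open>left unit: M o (j (x) 1) = lambda\<close>
    (\<forall>a\<in>eOb E. \<forall>b\<in>eOb E. \<forall>t\<in>carr (tensor unitC (ehom E a b)).
         eM E a b b (tmap unitC (ehom E a b) (ehom E b b) (ehom E a b) (eJ E b) (idm (ehom E a b)) t)
       = lunit (ehom E a b) t) \<and>
    \<comment> \<open>right unit: M o (1 (x) j) = rho\<close>
    (\<forall>a\<in>eOb E. \<forall>b\<in>eOb E. \<forall>t\<in>carr (tensor (ehom E a b) unitC).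
         eM E a a b (tmap (ehom E a b) unitC (ehom E a b) (ehom E a a) (idm (ehom E a b)) (eJ E a) t)
       = runit (ehom E a b) t) \<and>
    \<comment> \<open>extensionality (the structure maps carry no data outside their domains)\<close>
    (\<forall>a b c t. \<not> (a \<in> eOb E \<and> b \<in> eOb E \<and> c \<in> eOb E \<and>
                   t \<in> carr (tensor (ehom E b c) (ehom E a b))) \<longrightarrow> eM E a b c t = undefined) \<and>
    (\<forall>a. a \<notin> eOb E \<longrightarrow> eJ E a = (\<lambda>_. undefined))"

definition is_efun :: "('o, 'h) ecat \<Rightarrow> ('o, 'h) ecat \<Rightarrow> ('o \<Rightarrow> 'o) \<Rightarrow> ('o \<Rightarrow> 'o \<Rightarrow> 'h \<Rightarrow> 'h) \<Rightarrow> bool" where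
  "is_efun E E' Fo Fh \<longleftrightarrow>
    (\<forall>a\<in>eOb E. Fo a \<in> eOb E') \<and>
    (\<forall>a\<in>eOb E. \<forall>b\<in>eOb E. convex_map (ehom E a b) (ehom E' (Fo a) (Fo b)) (Fh a b)) \<and>
    (\<forall>a\<in>eOb E. \<forall>b\<in>eOb E. \<forall>c\<in>eOb E. \<forall>t\<in>carr (tensor (ehom E b c) (ehom E a b)).
       Fh a c (eM E a b c t)
       = eM E' (Fo a) (Fo b) (Fo c)
           (tmap (ehom E b c) (ehom E a b) (ehom E' (Fo b) (Fo c)) (ehom E' (Fo a) (Fo b))
                 (Fh b c) (Fh a b) t)) \<and>
    (\<forall>a\<in>eOb E. Fh a a (eJ E a ()) = eJ E' (Fo a) ()) \<and>
    (\<forall>a. a \<notin> eOb E \<longrightarrow> Fo a = undefined) \<and>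
    (\<forall>a b f. \<not> (a \<in> eOb E \<and> b \<in> eOb E \<and> f \<in> eHom E a b) \<longrightarrow> Fh a b f = undefined)"

section \<open>Algebras over the distribution monad on Cat\<close>

record ('o, 'h) dcat =
  dOb :: "'o set"
  dHom :: "'o \<Rightarrow> 'o \<Rightarrow> 'h set"
  dBary :: "'o \<Rightarrow> 'o \<Rightarrow> ('h \<Rightarrow> real) \<Rightarrow> 'h"
  dComp :: "'o \<Rightarrow> 'o \<Rightarrow> 'o \<Rightarrow> 'h \<Rightarrow> 'h \<Rightarrow> 'h"   \<comment> \<open>dComp a b c g f = g o f\<close>
  dId :: "'o \<Rightarrow> 'h"

definition dhom :: "('o, 'h, 'z) dcat_scheme \<Rightarrow> 'o \<Rightarrow> 'o \<Rightarrow> 'h cset" where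
  "dhom C a b = \<lparr>carr = dHom C a b, bary = dBary C a b\<rparr>"

definition is_dcat :: "('o, 'h) dcat \<Rightarrow> bool" where
  "is_dcat C \<longleftrightarrow>
    (\<forall>a\<in>dOb C. \<forall>b\<in>dOb C. convex_set (dhom C a b)) \<and>
    (\<forall>a\<in>dOb C. \<forall>b\<in>dOb C. \<forall>c\<in>dOb C. \<forall>g\<in>dHom C b c. \<forall>f\<in>dHom C a b.
       dComp C a b c g f \<in> dHom C a c) \<and>
    (\<forall>a\<in>dOb C. dId C a \<in> dHom C a a) \<and>
    (\<forall>a\<in>dOb C. \<forall>b\<in>dOb C. \<forall>f\<in>dHom C a b.
       dComp C a b b (dId C b) f = f \<and> dComp C a a b f (dId C a) = f) \<and>
    (\<forall>a\<in>dOb C. \<forall>b\<in>dOb C. \<forall>c\<in>dOb C. \<forall>d\<in>dOb C.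
       \<forall>f\<in>dHom C a b. \<forall>g\<in>dHom C b c. \<forall>h\<in>dHom C c d.
       dComp C a c d h (dComp C a b c g f) = dComp C a b d (dComp C b c d h g) f) \<and>
    (\<forall>a\<in>dOb C. \<forall>b\<in>dOb C. \<forall>c\<in>dOb C.
       biconvex (dhom C b c) (dhom C a b) (dhom C a c) (dComp C a b c)) \<and>
    (\<forall>a b c g f. \<not> (a \<in> dOb C \<and> b \<in> dOb C \<and> c \<in> dOb C \<and> g \<in> dHom C b c \<and> f \<in> dHom C a b)
       \<longrightarrow> dComp C a b c g f = undefined) \<and>
    (\<forall>a. a \<notin> dOb C \<longrightarrow> dId C a = undefined)"

definition is_dfun :: "('o, 'h) dcat \<Rightarrow> ('o, 'h) dcat \<Rightarrow> ('o \<Rightarrow> 'o) \<Rightarrow> ('o \<Rightarrow> 'o \<Rightarrow> 'h \<Rightarrow> 'h) \<Rightarrow> bool" where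
  "is_dfun C C' Fo Fh \<longleftrightarrow>
    (\<forall>a\<in>dOb C. Fo a \<in> dOb C') \<and>
    (\<forall>a\<in>dOb C. \<forall>b\<in>dOb C. \<forall>f\<in>dHom C a b. Fh a b f \<in> dHom C' (Fo a) (Fo b)) \<and>
    (\<forall>a\<in>dOb C. \<forall>b\<in>dOb C. \<forall>c\<in>dOb C. \<forall>g\<in>dHom C b c. \<forall>f\<in>dHom C a b.
       Fh a c (dComp C a b c g f) = dComp C' (Fo a) (Fo b) (Fo c) (Fh b c g) (Fh a b f)) \<and>
    (\<forall>a\<in>dOb C. Fh a a (dId C a) = dId C' (Fo a)) \<and>
    (\<forall>a\<in>dOb C. \<forall>b\<in>dOb C. convex_map (dhom C a b) (dhom C' (Fo a) (Fo b)) (Fh a b)) \<and>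
    (\<forall>a. a \<notin> dOb C \<longrightarrow> Fo a = undefined) \<and>
    (\<forall>a b f. \<not> (a \<in> dOb C \<and> b \<in> dOb C \<and> f \<in> dHom C a b) \<longrightarrow> Fh a b f = undefined)"

record ('ob, 'ar) bigcat =
  cOb :: "'ob set"
  cAr :: "'ar set"
  cDom :: "'ar \<Rightarrow> 'ob"
  cCod :: "'ar \<Rightarrow> 'ob"
  cComp :: "'ar \<Rightarrow> 'ar \<Rightarrow> 'ar"   \<comment> \<open>cComp g f = g o f\<close>
  cId :: "'ob \<Rightarrow> 'ar"

definition is_functor :: "('a, 'b) bigcat \<Rightarrow> ('c, 'd) bigcat \<Rightarrow> ('a \<Rightarrow> 'c) \<Rightarrow> ('b \<Rightarrow> 'd) \<Rightarrow> bool" where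
  "is_functor C D FO FA \<longleftrightarrow>
    (\<forall>x\<in>cOb C. FO x \<in> cOb D) \<and>
    (\<forall>f\<in>cAr C. FA f \<in> cAr D \<and> cDom D (FA f) = FO (cDom C f) \<and> cCod D (FA f) = FO (cCod C f)) \<and>
    (\<forall>x\<in>cOb C. FA (cId C x) = cId D (FO x)) \<and>
    (\<forall>f\<in>cAr C. \<forall>g\<in>cAr C. cCod C f = cDom C g \<longrightarrow> FA (cComp C g f) = cComp D (FA g) (FA f))"

definition cat_iso :: "('a, 'b) bigcat \<Rightarrow> ('c, 'd) bigcat \<Rightarrow> bool" where
  "cat_iso C D \<longleftrightarrow> (\<exists>FO FA GO GA. is_functor C D FO FA \<and> is_functor D C GO GA \<and>
     (\<forall>x\<in>cOb C. GO (FO x) = x) \<and> (\<forall>f\<in>cAr C. GA (FA f) = f) \<and>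
     (\<forall>y\<in>cOb D. FO (GO y) = y) \<and> (\<forall>g\<in>cAr D. FA (GA g) = g))"

definition fcomp_o :: "'o set \<Rightarrow> ('o \<Rightarrow> 'o) \<Rightarrow> ('o \<Rightarrow> 'o) \<Rightarrow> 'o \<Rightarrow> 'o" where
  "fcomp_o Ob Go Fo = restrict (Go \<circ> Fo) Ob"

definition fcomp_h :: "'o set \<Rightarrow> ('o \<Rightarrow> 'o \<Rightarrow> 'h set) \<Rightarrow> ('o \<Rightarrow> 'o)
    \<Rightarrow> ('o \<Rightarrow> 'o \<Rightarrow> 'h \<Rightarrow> 'h) \<Rightarrow> ('o \<Rightarrow> 'o \<Rightarrow> 'h \<Rightarrow> 'h) \<Rightarrow> 'o \<Rightarrow> 'o \<Rightarrow> 'h \<Rightarrow> 'h" where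
  "fcomp_h Ob Hom Fo Gh Fh = (\<lambda>a b. if a \<in> Ob \<and> b \<in> Ob
      then restrict (Gh (Fo a) (Fo b) \<circ> Fh a b) (Hom a b) else (\<lambda>_. undefined))"

definition fid_o :: "'o set \<Rightarrow> 'o \<Rightarrow> 'o" where
  "fid_o Ob = restrict id Ob"

definition fid_h :: "'o set \<Rightarrow> ('o \<Rightarrow> 'o \<Rightarrow> 'h set) \<Rightarrow> 'o \<Rightarrow> 'o \<Rightarrow> 'h \<Rightarrow> 'h" where
  "fid_h Ob Hom = (\<lambda>a b. if a \<in> Ob \<and> b \<in> Ob then restrict id (Hom a b) else (\<lambda>_. undefined))"

definition CSetCat :: "(('o, 'h) ecat,
    ('o, 'h) ecat \<times> ('o \<Rightarrow> 'o) \<times> ('o \<Rightarrow> 'o \<Rightarrow> 'h \<Rightarrow> 'h) \<times> ('o, 'h) ecat) bigcat" where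
  "CSetCat = \<lparr>cOb = {E. is_ecat E},
     cAr = {(E, Fo, Fh, E'). is_ecat E \<and> is_ecat E' \<and> is_efun E E' Fo Fh},
     cDom = (\<lambda>(E, Fo, Fh, E'). E),
     cCod = (\<lambda>(E, Fo, Fh, E'). E'),
     cComp = (\<lambda>(E2, Go, Gh, E3) (E1, Fo, Fh, E2').
                (E1, fcomp_o (eOb E1) Go Fo, fcomp_h (eOb E1) (eHom E1) Fo Gh Fh, E3)),
     cId = (\<lambda>E. (E, fid_o (eOb E), fid_h (eOb E) (eHom E), E))\<rparr>"

definition CatD :: "(('o, 'h) dcat,
    ('o, 'h) dcat \<times> ('o \<Rightarrow> 'o) \<times> ('o \<Rightarrow> 'o \<Rightarrow> 'h \<Rightarrow> 'h) \<times> ('o, 'h) dcat) bigcat" where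
  "CatD = \<lparr>cOb = {C. is_dcat C},
     cAr = {(C, Fo, Fh, C'). is_dcat C \<and> is_dcat C' \<and> is_dfun C C' Fo Fh},
     cDom = (\<lambda>(C, Fo, Fh, C'). C),
     cCod = (\<lambda>(C, Fo, Fh, C'). C'),
     cComp = (\<lambda>(C2, Go, Gh, C3) (C1, Fo, Fh, C2').
                (C1, fcomp_o (dOb C1) Go Fo, fcomp_h (dOb C1) (dHom C1) Fo Gh Fh, C3)),
     cId = (\<lambda>C. (C, fid_o (dOb C), fid_h (dOb C) (dHom C), C))\<rparr>"

end

(* A D-algebra structure on Cat is exactly a convex structure on every hom-set with biconvex
   composition. Biconvex maps X x Y -> Z correspond bijectively to convex maps X (x) Y -> Z: the
   tensor product is the quotient of D(X x Y) by the least congruence identifying the generating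
   pairs, and the barycentric extension of a biconvex map to D(X x Y) has a kernel that is a
   congruence containing them. Applied to composition, the enriched associativity and unit axioms
   hold iff they hold on pure tensors, where they are the ordinary category laws. The same
   reasoning matches enriched functors with functors preserving convex combinations, so the two
   translations are functorial and mutually inverse. *)

theory Submission
  imports Defs
begin

section \<open>The distribution monad\<close>

lemma DistI:
  "(\<And>x. 0 \<le> p x) \<Longrightarrow> finite (supp p) \<Longrightarrow> supp p \<subseteq> A \<Longrightarrow> sum p (supp p) = 1 \<Longrightarrow> p \<in> Dist A"
  by (auto simp: Dist_def)

lemma DistD:
  assumes "p \<in> Dist A"
  shows "\<And>x. 0 \<le> p x" "finite (supp p)" "supp p \<subseteq> A" "sum p (supp p) = 1"
  using assms by (auto simp: Dist_def)

lemma Dist_suppD: "p \<in> Dist A \<Longrightarrow> x \<in> supp p \<Longrightarrow> x \<in> A"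
  by (auto simp: Dist_def)

lemma sum_supp_superset:
  assumes "finite S" "supp p \<subseteq> S"
  shows "(\<Sum>x\<in>S. p x * g x) = (\<Sum>x\<in>supp p. p x * g x)"
  by (rule sum.mono_neutral_right[OF assms]) (auto simp: supp_def)

lemma Dmap_as_sum: "Dmap f p y = (\<Sum>x\<in>supp p. p x * (if f x = y then 1 else 0))"
  unfolding Dmap_def by (intro sum.cong refl) simp

lemma sum_supp_indicator:
  "finite (supp p) \<Longrightarrow> (\<Sum>x\<in>supp p. p x * (if x = y then 1 else 0)) = p y"
  by (simp add: if_distrib sum.delta' cong: if_cong) (simp add: supp_def)

lemma supp_Dmap: "supp (Dmap f p) \<subseteq> f ` supp p"
proof
  fix y assume y: "y \<in> supp (Dmap f p)"
  show "y \<in> f ` supp p"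
  proof (rule ccontr)
    assume "y \<notin> f ` supp p"
    then have "Dmap f p y = 0" unfolding Dmap_def by (intro sum.neutral) auto
    with y show False by (simp add: supp_def)
  qed
qed

lemma sum_Dmap:
  assumes fin: "finite (supp p)"
  shows "(\<Sum>y\<in>supp (Dmap f p). Dmap f p y * g y) = (\<Sum>x\<in>supp p. p x * g (f x))"
proof -
  have "(\<Sum>y\<in>supp (Dmap f p). Dmap f p y * g y) = (\<Sum>y\<in>f ` supp p. Dmap f p y * g y)"
    by (rule sum_supp_superset[OF finite_imageI[OF fin] supp_Dmap, symmetric])
  also have "\<dots> = (\<Sum>x\<in>supp p. \<Sum>y\<in>f ` supp p. if f x = y then p x * g y else 0)"
    unfolding Dmap_def sum_distrib_right by (subst sum.swap) (intro sum.cong refl, auto)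
  also have "\<dots> = (\<Sum>x\<in>supp p. p x * g (f x))"
    using fin by (simp add: sum.delta)
  finally show ?thesis .
qed

lemma supp_delta: "supp (delta x) = {x}"
  by (auto simp: supp_def delta_def)

lemma delta_in_Dist: "x \<in> A \<Longrightarrow> delta x \<in> Dist A"
  by (rule DistI) (auto simp: supp_delta, auto simp: delta_def)

lemma Dmap_in_Dist:
  assumes p: "p \<in> Dist A" and f: "\<And>x. x \<in> A \<Longrightarrow> f x \<in> B"
  shows "Dmap f p \<in> Dist B"
proof (rule DistI)
  show "\<And>y. 0 \<le> Dmap f p y" using DistD(1)[OF p] by (auto simp: Dmap_def intro: sum_nonneg)
  show "finite (supp (Dmap f p))" using DistD(2)[OF p] by (rule finite_subset[OF supp_Dmap finite_imageI])
  show "supp (Dmap f p) \<subseteq> B" using supp_Dmap[of f p] DistD(3)[OF p] f by blast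
  show "sum (Dmap f p) (supp (Dmap f p)) = 1"
    using sum_Dmap[OF DistD(2)[OF p], of f "\<lambda>_. 1"] DistD(4)[OF p] by simp
qed

lemma Dmap_delta: "Dmap f (delta x) = delta (f x)"
  unfolding Dmap_def supp_delta by (rule ext) (simp add: delta_def eq_commute)

lemma Dmap_cong: "(\<And>x. x \<in> supp p \<Longrightarrow> f x = g x) \<Longrightarrow> Dmap f p = Dmap g p"
  unfolding Dmap_def by (intro ext sum.cong) auto

lemma Dmap_comp:
  assumes "finite (supp p)"
  shows "Dmap g (Dmap f p) = Dmap (\<lambda>x. g (f x)) p"
proof
  fix z
  have "Dmap g (Dmap f p) z = (\<Sum>y\<in>supp (Dmap f p). Dmap f p y * (if g y = z then 1 else 0))"
    by (rule Dmap_as_sum)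
  also have "\<dots> = Dmap (\<lambda>x. g (f x)) p z"
    unfolding sum_Dmap[OF assms] by (rule Dmap_as_sum[symmetric])
  finally show "Dmap g (Dmap f p) z = Dmap (\<lambda>x. g (f x)) p z" .
qed

lemma Dmap_id:
  assumes "finite (supp p)"
  shows "Dmap (\<lambda>x. x) p = p"
proof
  fix y
  show "Dmap (\<lambda>x. x) p y = p y"
    unfolding Dmap_as_sum by (rule sum_supp_indicator[OF assms])
qed

lemma Dmap_const:
  assumes "p \<in> Dist A"
  shows "Dmap (\<lambda>_. c) p = delta c"
proof
  fix y
  show "Dmap (\<lambda>_. c) p y = delta c y"
    using DistD(4)[OF assms] by (auto simp: Dmap_def delta_def)
qed

lemma Dmu_Dmap:
  assumes "finite (supp p)"
  shows "Dmu (Dmap Q p) x = (\<Sum>y\<in>supp p. p y * Q y x)"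
  unfolding Dmu_def by (rule sum_Dmap[OF assms])

lemma Dmu_delta: "Dmu (delta p) = p"
  unfolding Dmu_def supp_delta by (rule ext) (simp add: delta_def)

lemma Dmu_Dmap_delta:
  assumes "finite (supp p)"
  shows "Dmu (Dmap (\<lambda>x. delta (g x)) p) = Dmap g p"
proof
  fix z
  show "Dmu (Dmap (\<lambda>x. delta (g x)) p) z = Dmap g p z"
    unfolding Dmu_Dmap[OF assms] Dmap_as_sum by (intro sum.cong) (auto simp: delta_def)
qed

lemma supp_Dmu: "supp (Dmu P) \<subseteq> \<Union> (supp ` supp P)"
proof
  fix x assume x: "x \<in> supp (Dmu P)"
  show "x \<in> \<Union> (supp ` supp P)"
  proof (rule ccontr)
    assume "x \<notin> \<Union> (supp ` supp P)"
    then have "Dmu P x = 0" unfolding Dmu_def by (intro sum.neutral) (auto simp: supp_def)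
    with x show False by (simp add: supp_def)
  qed
qed

lemma finite_Union_supp:
  assumes "P \<in> Dist (Dist A)"
  shows "finite (\<Union> (supp ` supp P))"
proof (rule finite_Union)
  show "finite (supp ` supp P)" using DistD(2)[OF assms] by (rule finite_imageI)
  show "\<And>M. M \<in> supp ` supp P \<Longrightarrow> finite M"
    using DistD(3)[OF assms] by (auto simp: Dist_def)
qed

lemma sum_Union_supp:
  assumes "P \<in> Dist (Dist A)" "q \<in> supp P"
  shows "(\<Sum>x\<in>\<Union> (supp ` supp P). q x * g x) = (\<Sum>x\<in>supp q. q x * g x)"
  by (rule sum_supp_superset[OF finite_Union_supp[OF assms(1)]]) (use assms(2) in blast)

lemma Dmu_in_Dist:
  assumes P: "P \<in> Dist (Dist A)"
  shows "Dmu P \<in> Dist A"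
proof (rule DistI)
  let ?S = "\<Union> (supp ` supp P)"
  have finS: "finite ?S" by (rule finite_Union_supp[OF P])
  have q: "\<And>q. q \<in> supp P \<Longrightarrow> q \<in> Dist A" using DistD(3)[OF P] by auto
  show "\<And>x. 0 \<le> Dmu P x"
    unfolding Dmu_def using DistD(1)[OF P] q
    by (intro sum_nonneg mult_nonneg_nonneg) (auto dest: DistD(1))
  show "finite (supp (Dmu P))" by (rule finite_subset[OF supp_Dmu finS])
  show "supp (Dmu P) \<subseteq> A" using supp_Dmu[of P] q by (auto dest: DistD(3))
  have "sum (Dmu P) (supp (Dmu P)) = (\<Sum>x\<in>?S. Dmu P x)"
    using sum_supp_superset[OF finS supp_Dmu, of "\<lambda>_. 1"] by simp
  also have "\<dots> = (\<Sum>q\<in>supp P. P q * (\<Sum>x\<in>?S. q x * 1))"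
    unfolding Dmu_def sum_distrib_left by (simp add: sum.swap[of _ ?S])
  also have "\<dots> = (\<Sum>q\<in>supp P. P q)"
    using sum_Union_supp[OF P, of _ "\<lambda>_. 1"] DistD(4)[OF q] by (intro sum.cong refl) simp
  also have "\<dots> = 1" by (rule DistD(4)[OF P])
  finally show "sum (Dmu P) (supp (Dmu P)) = 1" .
qed

lemma Dmap_Dmu:
  assumes P: "P \<in> Dist (Dist A)"
  shows "Dmap f (Dmu P) = Dmu (Dmap (Dmap f) P)"
proof
  fix y
  let ?S = "\<Union> (supp ` supp P)" and ?ind = "\<lambda>x. if f x = y then 1 else 0 :: real"
  have finS: "finite ?S" by (rule finite_Union_supp[OF P])
  have "Dmap f (Dmu P) y = (\<Sum>x\<in>?S. Dmu P x * ?ind x)"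
    unfolding Dmap_as_sum by (rule sum_supp_superset[OF finS supp_Dmu, symmetric])
  also have "\<dots> = (\<Sum>q\<in>supp P. P q * (\<Sum>x\<in>?S. q x * ?ind x))"
    unfolding Dmu_def sum_distrib_right sum_distrib_left
    by (subst sum.swap) (simp add: mult.assoc)
  also have "\<dots> = (\<Sum>q\<in>supp P. P q * Dmap f q y)"
    unfolding Dmap_as_sum by (intro sum.cong refl) (simp add: sum_Union_supp[OF P])
  also have "\<dots> = Dmu (Dmap (Dmap f) P) y"
    by (rule Dmu_Dmap[OF DistD(2)[OF P], symmetric])
  finally show "Dmap f (Dmu P) y = Dmu (Dmap (Dmap f) P) y" .
qed

lemma Dmu_Dmu:
  assumes PP: "PP \<in> Dist (Dist (Dist A))"
  shows "Dmu (Dmu PP) = Dmu (Dmap Dmu PP)"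
proof
  fix x
  let ?T = "\<Union> (supp ` supp PP)"
  have finT: "finite ?T" by (rule finite_Union_supp[OF PP])
  have "Dmu (Dmu PP) x = (\<Sum>q\<in>?T. Dmu PP q * q x)"
    unfolding Dmu_def[of "Dmu PP"] by (rule sum_supp_superset[OF finT supp_Dmu, symmetric])
  also have "\<dots> = (\<Sum>P\<in>supp PP. PP P * (\<Sum>q\<in>?T. P q * q x))"
    unfolding Dmu_def[of PP] sum_distrib_right sum_distrib_left
    by (subst sum.swap) (simp add: mult.assoc)
  also have "\<dots> = (\<Sum>P\<in>supp PP. PP P * Dmu P x)"
    unfolding Dmu_def by (intro sum.cong refl) (simp add: sum_Union_supp[OF PP])
  also have "\<dots> = Dmu (Dmap Dmu PP) x"
    by (rule Dmu_Dmap[OF DistD(2)[OF PP], symmetric])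
  finally show "Dmu (Dmu PP) x = Dmu (Dmap Dmu PP) x" .
qed

lemma prodist_apply [simp]: "prodist p q (x, y) = p x * q y"
  by (simp add: prodist_def)

lemma supp_prodist: "supp (prodist p q) = supp p \<times> supp q"
  by (auto simp: supp_def prodist_def)

lemma Dmap_prodist_as_sum:
  assumes "finite (supp p)" "finite (supp q)"
  shows "Dmap h (prodist p q) w
    = (\<Sum>x\<in>supp p. \<Sum>y\<in>supp q. p x * q y * (if h (x, y) = w then 1 else 0))"
  unfolding Dmap_as_sum supp_prodist sum.cartesian_product
  by (rule sum.cong) (auto simp: prodist_def)

lemma prodist_in_Dist:
  assumes p: "p \<in> Dist A" and q: "q \<in> Dist B"
  shows "prodist p q \<in> Dist (A \<times> B)"
proof (rule DistI)
  show "\<And>z. 0 \<le> prodist p q z" using DistD(1)[OF p] DistD(1)[OF q] by (auto simp: prodist_def)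
  show "finite (supp (prodist p q))" "supp (prodist p q) \<subseteq> A \<times> B"
    unfolding supp_prodist using DistD(2,3)[OF p] DistD(2,3)[OF q] by auto
  have "sum (prodist p q) (supp (prodist p q)) = sum p (supp p) * sum q (supp q)"
    unfolding supp_prodist sum.cartesian_product sum_product by (simp add: prodist_def case_prod_unfold)
  then show "sum (prodist p q) (supp (prodist p q)) = 1" using DistD(4)[OF p] DistD(4)[OF q] by simp
qed

lemma Dmap_prodist:
  assumes "finite (supp p)" "finite (supp q)"
  shows "Dmap (\<lambda>(x, y). (f x, g y)) (prodist p q) = prodist (Dmap f p) (Dmap g q)"
proof
  fix w :: "'c \<times> 'd"
  obtain u v where w: "w = (u, v)" by (cases w)
  have "Dmap (\<lambda>(x, y). (f x, g y)) (prodist p q) w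
      = (\<Sum>x\<in>supp p. \<Sum>y\<in>supp q. (p x * (if f x = u then 1 else 0)) * (q y * (if g y = v then 1 else 0)))"
    unfolding Dmap_prodist_as_sum[OF assms] w by (intro sum.cong refl) simp
  also have "\<dots> = prodist (Dmap f p) (Dmap g q) w"
    unfolding Dmap_as_sum w by (simp add: sum_product)
  finally show "Dmap (\<lambda>(x, y). (f x, g y)) (prodist p q) w = prodist (Dmap f p) (Dmap g q) w" .
qed

lemma Dmu_Dmap_Dmap_left:
  assumes "finite (supp r)" "finite (supp q)"
  shows "Dmu (Dmap (\<lambda>a. Dmap (g a) q) r) = Dmap (\<lambda>(a, b). g a b) (prodist r q)"
  unfolding Dmu_Dmap[OF assms(1), abs_def] Dmap_prodist_as_sum[OF assms, abs_def] Dmap_as_sum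
  by (simp add: sum_distrib_left mult.assoc)

lemma Dmu_Dmap_Dmap_right:
  assumes "finite (supp r)" "finite (supp q)"
  shows "Dmu (Dmap (\<lambda>b. Dmap (\<lambda>a. g a b) r) q) = Dmap (\<lambda>(a, b). g a b) (prodist r q)"
  unfolding Dmu_Dmap[OF assms(2), abs_def] Dmap_prodist_as_sum[OF assms, abs_def] Dmap_as_sum
  by (subst sum.swap) (simp add: sum_distrib_left mult_ac)

lemma Dmap_fst_prodist:
  assumes "finite (supp p)" "q \<in> Dist B"
  shows "Dmap fst (prodist p q) = p"
  using assms unfolding Dmap_prodist_as_sum[OF assms(1) DistD(2)[OF assms(2)], abs_def]
  by (simp add: sum_distrib_left[symmetric] mult.assoc sum_supp_indicator DistD(2,4)
      flip: sum_distrib_right)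

lemma Dmap_snd_prodist:
  assumes "p \<in> Dist A" "finite (supp q)"
  shows "Dmap snd (prodist p q) = q"
  using assms unfolding Dmap_prodist_as_sum[OF DistD(2)[OF assms(1)] assms(2), abs_def]
  by (simp add: sum_distrib_left[symmetric] mult.assoc sum_supp_indicator DistD(2,4)
      flip: sum_distrib_right)

lemma Dmap_Pair_left:
  assumes "finite (supp p)"
  shows "Dmap (\<lambda>x. (x, y)) p = prodist p (delta y)"
proof
  fix w
  show "Dmap (\<lambda>x. (x, y)) p w = prodist p (delta y) w"
    using sum_supp_indicator[OF assms, of "fst w"]
    by (cases w) (simp add: Dmap_as_sum delta_def sum_distrib_right[symmetric])
qed

lemma Dmap_Pair_right:
  assumes "finite (supp q)"
  shows "Dmap (\<lambda>y. (x, y)) q = prodist (delta x) q"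
proof
  fix w
  show "Dmap (\<lambda>y. (x, y)) q w = prodist (delta x) q w"
    using sum_supp_indicator[OF assms, of "snd w"]
    by (cases w) (simp add: Dmap_as_sum delta_def sum_distrib_left[symmetric])
qed

section \<open>Convex sets, convex maps and biconvex maps\<close>

lemma convex_set_bary_in: "convex_set X \<Longrightarrow> p \<in> Dist (carr X) \<Longrightarrow> bary X p \<in> carr X"
  unfolding convex_set_def by blast

lemma convex_set_bary_delta: "convex_set X \<Longrightarrow> x \<in> carr X \<Longrightarrow> bary X (delta x) = x"
  unfolding convex_set_def by blast

lemma convex_set_bary_Dmu:
  "convex_set X \<Longrightarrow> P \<in> Dist (Dist (carr X)) \<Longrightarrow> bary X (Dmu P) = bary X (Dmap (bary X) P)"
  unfolding convex_set_def by blast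

lemma convex_set_bary_Dmu_Dmap:
  assumes X: "convex_set X" and p: "p \<in> Dist A" and Q: "\<And>a. a \<in> A \<Longrightarrow> Q a \<in> Dist (carr X)"
  shows "bary X (Dmap (\<lambda>a. bary X (Q a)) p) = bary X (Dmu (Dmap Q p))"
  using convex_set_bary_Dmu[OF X Dmap_in_Dist[OF p Q]] by (simp add: Dmap_comp[OF DistD(2)[OF p]])

lemma convex_set_bary_Dmap_Dmu:
  assumes Z: "convex_set Z" and f: "\<And>a. a \<in> A \<Longrightarrow> f a \<in> carr Z" and P: "P \<in> Dist (Dist A)"
  shows "bary Z (Dmap f (Dmu P)) = bary Z (Dmap (\<lambda>r. bary Z (Dmap f r)) P)"
  unfolding Dmap_Dmu[OF P]
  by (rule convex_set_bary_Dmu_Dmap[OF Z P, symmetric]) (rule Dmap_in_Dist[OF _ f])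

lemma convex_set_bary_iterated_left:
  assumes V: "convex_set V" and r: "r \<in> Dist A" and q: "q \<in> Dist B"
    and g: "\<And>a b. a \<in> A \<Longrightarrow> b \<in> B \<Longrightarrow> g a b \<in> carr V"
  shows "bary V (Dmap (\<lambda>a. bary V (Dmap (g a) q)) r) = bary V (Dmap (\<lambda>(a, b). g a b) (prodist r q))"
  using convex_set_bary_Dmu_Dmap[OF V r Dmap_in_Dist[OF q g]]
  by (simp add: Dmu_Dmap_Dmap_left[OF DistD(2)[OF r] DistD(2)[OF q]])

lemma convex_set_bary_iterated_right:
  assumes V: "convex_set V" and r: "r \<in> Dist A" and q: "q \<in> Dist B"
    and g: "\<And>a b. a \<in> A \<Longrightarrow> b \<in> B \<Longrightarrow> g a b \<in> carr V"
  shows "bary V (Dmap (\<lambda>b. bary V (Dmap (\<lambda>a. g a b) r)) q) = bary V (Dmap (\<lambda>(a, b). g a b) (prodist r q))"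
  using convex_set_bary_Dmu_Dmap[OF V q Dmap_in_Dist[OF r g]]
  by (simp add: Dmu_Dmap_Dmap_right[OF DistD(2)[OF r] DistD(2)[OF q]])

lemma convex_mapI:
  "(\<And>x. x \<in> carr X \<Longrightarrow> f x \<in> carr Y) \<Longrightarrow>
   (\<And>p. p \<in> Dist (carr X) \<Longrightarrow> f (bary X p) = bary Y (Dmap f p)) \<Longrightarrow> convex_map X Y f"
  unfolding convex_map_def by blast

lemma convex_map_in: "convex_map X Y f \<Longrightarrow> x \<in> carr X \<Longrightarrow> f x \<in> carr Y"
  unfolding convex_map_def by blast

lemma convex_map_bary: "convex_map X Y f \<Longrightarrow> p \<in> Dist (carr X) \<Longrightarrow> f (bary X p) = bary Y (Dmap f p)"
  unfolding convex_map_def by blast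

lemma convex_map_comp:
  assumes f: "convex_map X Y f" and g: "convex_map Y Z g"
  shows "convex_map X Z (\<lambda>x. g (f x))"
proof (rule convex_mapI)
  show "\<And>x. x \<in> carr X \<Longrightarrow> g (f x) \<in> carr Z" using convex_map_in[OF f] convex_map_in[OF g] by blast
  fix p assume p: "p \<in> Dist (carr X)"
  have "g (f (bary X p)) = bary Z (Dmap g (Dmap f p))"
    unfolding convex_map_bary[OF f p] by (rule convex_map_bary[OF g Dmap_in_Dist[OF p convex_map_in[OF f]]])
  then show "g (f (bary X p)) = bary Z (Dmap (\<lambda>x. g (f x)) p)"
    by (simp add: Dmap_comp[OF DistD(2)[OF p]])
qed

lemma convex_map_cong:
  assumes X: "convex_set X" and f: "convex_map X Y f" and eq: "\<And>x. x \<in> carr X \<Longrightarrow> f x = g x"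
  shows "convex_map X Y g"
proof (rule convex_mapI)
  show "\<And>x. x \<in> carr X \<Longrightarrow> g x \<in> carr Y" using convex_map_in[OF f] eq by metis
  fix p assume p: "p \<in> Dist (carr X)"
  have "g (bary X p) = f (bary X p)" using eq[OF convex_set_bary_in[OF X p]] by simp
  also have "\<dots> = bary Y (Dmap f p)" by (rule convex_map_bary[OF f p])
  also have "Dmap f p = Dmap g p" by (rule Dmap_cong) (use eq Dist_suppD[OF p] in blast)
  finally show "g (bary X p) = bary Y (Dmap g p)" .
qed

lemma convex_map_id: "convex_map X X (\<lambda>x. x)"
  by (rule convex_mapI) (simp_all add: Dmap_id[OF DistD(2)])

lemma convex_map_idm:
  assumes "convex_set X"
  shows "convex_map X X (idm X)"
  by (rule convex_map_cong[OF assms convex_map_id]) (simp add: idm_def)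

lemma convex_map_const:
  assumes Y: "convex_set Y" and c: "c \<in> carr Y"
  shows "convex_map X Y (\<lambda>_. c)"
  by (rule convex_mapI) (simp_all add: c Dmap_const convex_set_bary_delta[OF Y c])

lemma biconvexI:
  "(\<And>x y. x \<in> carr X \<Longrightarrow> y \<in> carr Y \<Longrightarrow> b x y \<in> carr Z) \<Longrightarrow>
   (\<And>p q. p \<in> Dist (carr X) \<Longrightarrow> q \<in> Dist (carr Y) \<Longrightarrow>
      b (bary X p) (bary Y q) = bary Z (Dmap (\<lambda>(x, y). b x y) (prodist p q))) \<Longrightarrow> biconvex X Y Z b"
  unfolding biconvex_def by blast

lemma biconvex_in: "biconvex X Y Z b \<Longrightarrow> x \<in> carr X \<Longrightarrow> y \<in> carr Y \<Longrightarrow> b x y \<in> carr Z"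
  unfolding biconvex_def by blast

lemma biconvex_bary:
  "biconvex X Y Z b \<Longrightarrow> p \<in> Dist (carr X) \<Longrightarrow> q \<in> Dist (carr Y) \<Longrightarrow>
   b (bary X p) (bary Y q) = bary Z (Dmap (\<lambda>(x, y). b x y) (prodist p q))"
  unfolding biconvex_def by blast

lemma biconvex_convex_map_left:
  assumes Y: "convex_set Y" and b: "biconvex X Y Z b" and y: "y \<in> carr Y"
  shows "convex_map X Z (\<lambda>x. b x y)"
proof (rule convex_mapI)
  show "\<And>x. x \<in> carr X \<Longrightarrow> b x y \<in> carr Z" using biconvex_in[OF b] y by blast
  fix p assume p: "p \<in> Dist (carr X)"
  have "b (bary X p) y = b (bary X p) (bary Y (delta y))" by (simp add: convex_set_bary_delta[OF Y y])
  also have "\<dots> = bary Z (Dmap (\<lambda>(x, y). b x y) (Dmap (\<lambda>x. (x, y)) p))"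
    unfolding Dmap_Pair_left[OF DistD(2)[OF p]] by (rule biconvex_bary[OF b p delta_in_Dist[OF y]])
  finally show "b (bary X p) y = bary Z (Dmap (\<lambda>x. b x y) p)"
    by (simp add: Dmap_comp[OF DistD(2)[OF p]])
qed

lemma biconvex_convex_map_right:
  assumes X: "convex_set X" and b: "biconvex X Y Z b" and x: "x \<in> carr X"
  shows "convex_map Y Z (b x)"
proof (rule convex_mapI)
  show "\<And>y. y \<in> carr Y \<Longrightarrow> b x y \<in> carr Z" using biconvex_in[OF b] x by blast
  fix q assume q: "q \<in> Dist (carr Y)"
  have "b x (bary Y q) = b (bary X (delta x)) (bary Y q)" by (simp add: convex_set_bary_delta[OF X x])
  also have "\<dots> = bary Z (Dmap (\<lambda>(x, y). b x y) (Dmap (\<lambda>y. (x, y)) q))"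
    unfolding Dmap_Pair_right[OF DistD(2)[OF q]] by (rule biconvex_bary[OF b delta_in_Dist[OF x] q])
  finally show "b x (bary Y q) = bary Z (Dmap (b x) q)"
    by (simp add: Dmap_comp[OF DistD(2)[OF q]])
qed

lemma convex_map_comp_biconvex:
  assumes b: "biconvex X Y Z b" and h: "convex_map Z W h"
  shows "biconvex X Y W (\<lambda>x y. h (b x y))"
proof (rule biconvexI)
  show "\<And>x y. x \<in> carr X \<Longrightarrow> y \<in> carr Y \<Longrightarrow> h (b x y) \<in> carr W"
    using biconvex_in[OF b] convex_map_in[OF h] by blast
  fix p q assume p: "p \<in> Dist (carr X)" and q: "q \<in> Dist (carr Y)"
  have pq: "prodist p q \<in> Dist (carr X \<times> carr Y)" by (rule prodist_in_Dist[OF p q])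
  have "h (b (bary X p) (bary Y q)) = bary W (Dmap h (Dmap (\<lambda>(x, y). b x y) (prodist p q)))"
    unfolding biconvex_bary[OF b p q]
    by (rule convex_map_bary[OF h Dmap_in_Dist[OF pq]]) (auto intro: biconvex_in[OF b])
  then show "h (b (bary X p) (bary Y q)) = bary W (Dmap (\<lambda>(x, y). h (b x y)) (prodist p q))"
    by (simp add: Dmap_comp[OF DistD(2)[OF pq]] case_prod_beta')
qed

lemma biconvex_comp_convex_maps:
  assumes b: "biconvex X' Y' Z b" and f: "convex_map X X' f" and g: "convex_map Y Y' g"
  shows "biconvex X Y Z (\<lambda>x y. b (f x) (g y))"
proof (rule biconvexI)
  show "\<And>x y. x \<in> carr X \<Longrightarrow> y \<in> carr Y \<Longrightarrow> b (f x) (g y) \<in> carr Z"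
    using biconvex_in[OF b] convex_map_in[OF f] convex_map_in[OF g] by blast
  fix p q assume p: "p \<in> Dist (carr X)" and q: "q \<in> Dist (carr Y)"
  have "b (f (bary X p)) (g (bary Y q)) = bary Z (Dmap (\<lambda>(x, y). b x y) (prodist (Dmap f p) (Dmap g q)))"
    unfolding convex_map_bary[OF f p] convex_map_bary[OF g q]
    by (rule biconvex_bary[OF b Dmap_in_Dist[OF p convex_map_in[OF f]] Dmap_in_Dist[OF q convex_map_in[OF g]]])
  also have "prodist (Dmap f p) (Dmap g q) = Dmap (\<lambda>(x, y). (f x, g y)) (prodist p q)"
    by (rule Dmap_prodist[OF DistD(2)[OF p] DistD(2)[OF q], symmetric])
  finally show "b (f (bary X p)) (g (bary Y q)) = bary Z (Dmap (\<lambda>(x, y). b (f x) (g y)) (prodist p q))"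
    using DistD(2)[OF p] DistD(2)[OF q] by (simp add: Dmap_comp supp_prodist case_prod_beta')
qed

lemma biconvex_cong:
  assumes X: "convex_set X" and Y: "convex_set Y" and b: "biconvex X Y Z b"
    and eq: "\<And>x y. x \<in> carr X \<Longrightarrow> y \<in> carr Y \<Longrightarrow> b x y = b' x y"
  shows "biconvex X Y Z b'"
proof (rule biconvexI)
  show "\<And>x y. x \<in> carr X \<Longrightarrow> y \<in> carr Y \<Longrightarrow> b' x y \<in> carr Z"
    using biconvex_in[OF b] eq by metis
  fix p q assume p: "p \<in> Dist (carr X)" and q: "q \<in> Dist (carr Y)"
  have "Dmap (\<lambda>(x, y). b x y) (prodist p q) = Dmap (\<lambda>(x, y). b' x y) (prodist p q)"
    using Dist_suppD[OF p] Dist_suppD[OF q] eq by (intro Dmap_cong) (auto simp: supp_prodist)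
  then show "b' (bary X p) (bary Y q) = bary Z (Dmap (\<lambda>(x, y). b' x y) (prodist p q))"
    using biconvex_bary[OF b p q] eq[OF convex_set_bary_in[OF X p] convex_set_bary_in[OF Y q]] by simp
qed

lemma biconvexI_separately:
  assumes Y: "convex_set Y" and V: "convex_set V"
    and inV: "\<And>x y. x \<in> carr X \<Longrightarrow> y \<in> carr Y \<Longrightarrow> b x y \<in> carr V"
    and left: "\<And>y. y \<in> carr Y \<Longrightarrow> convex_map X V (\<lambda>x. b x y)"
    and right: "\<And>x. x \<in> carr X \<Longrightarrow> convex_map Y V (b x)"
  shows "biconvex X Y V b"
proof (rule biconvexI)
  show "\<And>x y. x \<in> carr X \<Longrightarrow> y \<in> carr Y \<Longrightarrow> b x y \<in> carr V" by (rule inV)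
  fix p q assume p: "p \<in> Dist (carr X)" and q: "q \<in> Dist (carr Y)"
  have "b (bary X p) (bary Y q) = bary V (Dmap (\<lambda>x. b x (bary Y q)) p)"
    by (rule convex_map_bary[OF left[OF convex_set_bary_in[OF Y q]] p])
  also have "Dmap (\<lambda>x. b x (bary Y q)) p = Dmap (\<lambda>x. bary V (Dmap (b x) q)) p"
    by (rule Dmap_cong) (rule convex_map_bary[OF right q], rule Dist_suppD[OF p])
  also have "bary V \<dots> = bary V (Dmap (\<lambda>(x, y). b x y) (prodist p q))"
    by (rule convex_set_bary_iterated_left[OF V p q inV])
  finally show "b (bary X p) (bary Y q) = bary V (Dmap (\<lambda>(x, y). b x y) (prodist p q))" .
qed

lemma convex_map_mixture:
  assumes Z: "convex_set Z" and V: "convex_set V" and r: "r \<in> Dist A"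
    and k: "\<And>a. a \<in> A \<Longrightarrow> convex_map Z V (k a)"
  shows "convex_map Z V (\<lambda>z. bary V (Dmap (\<lambda>a. k a z) r))"
proof (rule convex_mapI)
  have kin: "\<And>a z. a \<in> A \<Longrightarrow> z \<in> carr Z \<Longrightarrow> k a z \<in> carr V" by (rule convex_map_in[OF k])
  show "\<And>z. z \<in> carr Z \<Longrightarrow> bary V (Dmap (\<lambda>a. k a z) r) \<in> carr V"
    by (rule convex_set_bary_in[OF V], rule Dmap_in_Dist[OF r], rule kin)
  fix q assume q: "q \<in> Dist (carr Z)"
  have "Dmap (\<lambda>a. k a (bary Z q)) r = Dmap (\<lambda>a. bary V (Dmap (k a) q)) r"
    by (rule Dmap_cong) (rule convex_map_bary[OF k q], rule Dist_suppD[OF r])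
  then have "bary V (Dmap (\<lambda>a. k a (bary Z q)) r) = bary V (Dmap (\<lambda>(a, z). k a z) (prodist r q))"
    using convex_set_bary_iterated_left[OF V r q kin] by simp
  also have "\<dots> = bary V (Dmap (\<lambda>z. bary V (Dmap (\<lambda>a. k a z) r)) q)"
    by (rule convex_set_bary_iterated_right[OF V r q kin, symmetric])
  finally show "bary V (Dmap (\<lambda>a. k a (bary Z q)) r) = bary V (Dmap (\<lambda>z. bary V (Dmap (\<lambda>a. k a z) r)) q)" .
qed

section \<open>The convex tensor product\<close>

lemma carr_free_cset [simp]: "carr (free_cset A) = Dist A"
  by (simp add: free_cset_def)

lemma bary_free_cset [simp]: "bary (free_cset A) = Dmu"
  by (simp add: free_cset_def)

lemma cset_congruenceD:
  assumes "cset_congruence (free_cset A) R"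
    and "P \<in> Dist (Dist A)" "Q \<in> Dist (Dist A)" "Dmap (\<lambda>x. R `` {x}) P = Dmap (\<lambda>x. R `` {x}) Q"
  shows "(Dmu P, Dmu Q) \<in> R"
  using assms unfolding cset_congruence_def by simp

lemma cset_congruence_UNIV: "cset_congruence (free_cset A) (Dist A \<times> Dist A)"
  unfolding cset_congruence_def
  by (auto simp: equiv_def refl_on_def sym_def trans_def intro: Dmu_in_Dist)

lemma Dmap_Image_coarser:
  assumes R: "equiv A R" and S: "equiv A S" and SR: "S \<subseteq> R" and M: "M \<in> Dist A"
  shows "Dmap (\<lambda>c. R `` c) (Dmap (\<lambda>x. S `` {x}) M) = Dmap (\<lambda>x. R `` {x}) M"
proof -
  have "R `` (S `` {x}) = R `` {x}" if "x \<in> A" for x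
    using that R S SR unfolding equiv_def refl_on_def trans_def by blast
  then show ?thesis
    unfolding Dmap_comp[OF DistD(2)[OF M]] by (intro Dmap_cong) (simp add: Dist_suppD[OF M])
qed

lemma cset_congruence_Inter:
  assumes ne: "F \<noteq> {}" and cong: "\<And>R. R \<in> F \<Longrightarrow> cset_congruence (free_cset A) R"
  shows "cset_congruence (free_cset A) (\<Inter>F)"
proof -
  have equivF: "\<And>R. R \<in> F \<Longrightarrow> equiv (Dist A) R" using cong by (simp add: cset_congruence_def)
  have equiv: "equiv (Dist A) (\<Inter>F)"
  proof (rule equivI)
    obtain R0 where "R0 \<in> F" using ne by blast
    then show "\<Inter>F \<subseteq> Dist A \<times> Dist A" using equivF unfolding equiv_def refl_on_def by blast
    show "refl_on (Dist A) (\<Inter>F)" using equivF unfolding equiv_def refl_on_def by blast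
    show "sym (\<Inter>F)" using equivF unfolding equiv_def sym_def by blast
    show "trans (\<Inter>F)" using equivF unfolding equiv_def trans_def by blast
  qed
  show ?thesis unfolding cset_congruence_def
  proof (intro conjI ballI impI)
    show "equiv (carr (free_cset A)) (\<Inter>F)" using equiv by simp
    fix P Q assume "P \<in> Dist (carr (free_cset A))" "Q \<in> Dist (carr (free_cset A))"
      and PQ: "Dmap (\<lambda>x. \<Inter>F `` {x}) P = Dmap (\<lambda>x. \<Inter>F `` {x}) Q"
    then have P: "P \<in> Dist (Dist A)" and Q: "Q \<in> Dist (Dist A)" by simp_all
    have "(Dmu P, Dmu Q) \<in> R" if R: "R \<in> F" for R
    proof (rule cset_congruenceD[OF cong[OF R] P Q])
      have "\<Inter>F \<subseteq> R" using R by blast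
      then show "Dmap (\<lambda>x. R `` {x}) P = Dmap (\<lambda>x. R `` {x}) Q"
        using Dmap_Image_coarser[OF equivF[OF R] equiv _ P] Dmap_Image_coarser[OF equivF[OF R] equiv _ Q] PQ
        by metis
    qed
    then show "(bary (free_cset A) P, bary (free_cset A) Q) \<in> \<Inter>F" by simp
  qed
qed

definition tensor_class :: "'x cset \<Rightarrow> 'y cset \<Rightarrow> ('x \<times> 'y \<Rightarrow> real) \<Rightarrow> ('x \<times> 'y \<Rightarrow> real) set" where
  "tensor_class X Y r = tensor_rel X Y `` {r}"

lemma carr_tensor: "carr (tensor X Y) = Dist (carr X \<times> carr Y) // tensor_rel X Y"
  by (simp add: tensor_def)

lemma bary_tensor: "bary (tensor X Y) P = tensor_class X Y (Dmu (Dmap some_elem P))"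
  by (simp add: tensor_def tensor_class_def some_elem_def[abs_def])

lemma tens_eq_tensor_class: "tens X Y x y = tensor_class X Y (delta (x, y))"
  by (simp add: tens_def tensor_class_def)

lemma tensor_gens_subset:
  assumes X: "convex_set X" and Y: "convex_set Y"
  shows "tensor_gens X Y \<subseteq> Dist (carr X \<times> carr Y) \<times> Dist (carr X \<times> carr Y)"
  unfolding tensor_gens_def
  by (auto intro!: delta_in_Dist Dmap_in_Dist convex_set_bary_in[OF X] convex_set_bary_in[OF Y])

lemma tensor_rel_least:
  "cset_congruence (free_cset (carr X \<times> carr Y)) K \<Longrightarrow> tensor_gens X Y \<subseteq> K \<Longrightarrow> tensor_rel X Y \<subseteq> K"
  unfolding tensor_rel_def by blast

lemma tensor_gens_subset_tensor_rel: "tensor_gens X Y \<subseteq> tensor_rel X Y"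
  unfolding tensor_rel_def by blast

lemma tensor_rel_congruence:
  assumes "convex_set X" "convex_set Y"
  shows "cset_congruence (free_cset (carr X \<times> carr Y)) (tensor_rel X Y)"
  unfolding tensor_rel_def
  using cset_congruence_UNIV tensor_gens_subset[OF assms] by (intro cset_congruence_Inter) blast+

lemma equiv_tensor_rel:
  assumes "convex_set X" "convex_set Y"
  shows "equiv (Dist (carr X \<times> carr Y)) (tensor_rel X Y)"
  using tensor_rel_congruence[OF assms] by (simp add: cset_congruence_def)

lemma tensor_rel_Dmu:
  assumes "convex_set X" "convex_set Y"
    and "P \<in> Dist (Dist (carr X \<times> carr Y))" "Q \<in> Dist (Dist (carr X \<times> carr Y))"
    and "Dmap (tensor_class X Y) P = Dmap (tensor_class X Y) Q"
  shows "(Dmu P, Dmu Q) \<in> tensor_rel X Y"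
  using assms by (intro cset_congruenceD[OF tensor_rel_congruence]) (simp_all add: tensor_class_def[abs_def])

lemma tensor_class_in:
  "r \<in> Dist (carr X \<times> carr Y) \<Longrightarrow> tensor_class X Y r \<in> carr (tensor X Y)"
  unfolding carr_tensor tensor_class_def by (rule quotientI)

lemma tensor_class_eq_iff:
  assumes "convex_set X" "convex_set Y" "r \<in> Dist (carr X \<times> carr Y)" "r' \<in> Dist (carr X \<times> carr Y)"
  shows "tensor_class X Y r = tensor_class X Y r' \<longleftrightarrow> (r, r') \<in> tensor_rel X Y"
  unfolding tensor_class_def by (rule eq_equiv_class_iff[OF equiv_tensor_rel[OF assms(1,2)] assms(3,4)])

lemma
  assumes X: "convex_set X" and Y: "convex_set Y" and c: "c \<in> carr (tensor X Y)"
  shows some_elem_tensor_in: "some_elem c \<in> Dist (carr X \<times> carr Y)"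
    and tensor_class_some_elem: "tensor_class X Y (some_elem c) = c"
proof -
  note equiv = equiv_tensor_rel[OF X Y]
  from c obtain r where r: "r \<in> Dist (carr X \<times> carr Y)" and cr: "c = tensor_rel X Y `` {r}"
    unfolding carr_tensor by (rule quotientE)
  have "r \<in> c" using cr equiv_class_self[OF equiv r] by simp
  then have "some_elem c \<in> c" unfolding some_elem_def by (rule someI[where P = "\<lambda>q. q \<in> c"])
  then have rc: "(r, some_elem c) \<in> tensor_rel X Y" using cr by simp
  then show "some_elem c \<in> Dist (carr X \<times> carr Y)" using equiv unfolding equiv_def refl_on_def by blast
  show "tensor_class X Y (some_elem c) = c"
    unfolding tensor_class_def by (subst (2) cr) (rule equiv_class_eq[OF equiv rc, symmetric])
qed

lemma tensor_cases:
  assumes "convex_set X" "convex_set Y" "c \<in> carr (tensor X Y)"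
  obtains r where "r \<in> Dist (carr X \<times> carr Y)" "c = tensor_class X Y r"
  using some_elem_tensor_in[OF assms] tensor_class_some_elem[OF assms] by metis

lemma Dmap_some_elem_in_Dist:
  assumes "convex_set X" "convex_set Y" "P \<in> Dist (carr (tensor X Y))"
  shows "Dmap some_elem P \<in> Dist (Dist (carr X \<times> carr Y))"
  by (rule Dmap_in_Dist[OF assms(3)]) (rule some_elem_tensor_in[OF assms(1,2)])

lemma Dmap_tensor_class_some_elem:
  assumes "convex_set X" "convex_set Y" "P \<in> Dist (carr (tensor X Y))"
  shows "Dmap (tensor_class X Y) (Dmap some_elem P) = P"
  using Dmap_id[OF DistD(2)[OF assms(3)]]
  by (simp add: Dmap_comp[OF DistD(2)[OF assms(3)]] tensor_class_some_elem[OF assms(1,2) Dist_suppD[OF assms(3)]]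
      cong: Dmap_cong)

lemma bary_tensor_class:
  assumes X: "convex_set X" and Y: "convex_set Y" and P: "P \<in> Dist (Dist (carr X \<times> carr Y))"
  shows "bary (tensor X Y) (Dmap (tensor_class X Y) P) = tensor_class X Y (Dmu P)"
proof -
  let ?P' = "Dmap some_elem (Dmap (tensor_class X Y) P)"
  have classes: "Dmap (tensor_class X Y) P \<in> Dist (carr (tensor X Y))"
    by (rule Dmap_in_Dist[OF P tensor_class_in])
  have "(Dmu ?P', Dmu P) \<in> tensor_rel X Y"
    by (rule tensor_rel_Dmu[OF X Y Dmap_some_elem_in_Dist[OF X Y classes] P])
       (rule Dmap_tensor_class_some_elem[OF X Y classes])
  then show ?thesis
    unfolding bary_tensor
    using tensor_class_eq_iff[OF X Y Dmu_in_Dist[OF Dmap_some_elem_in_Dist[OF X Y classes]] Dmu_in_Dist[OF P]]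
    by blast
qed

lemma tens_in:
  "x \<in> carr X \<Longrightarrow> y \<in> carr Y \<Longrightarrow> tens X Y x y \<in> carr (tensor X Y)"
  unfolding tens_eq_tensor_class by (rule tensor_class_in[OF delta_in_Dist]) simp

lemma tensor_class_eq_bary_tens:
  assumes X: "convex_set X" and Y: "convex_set Y" and r: "r \<in> Dist (carr X \<times> carr Y)"
  shows "tensor_class X Y r = bary (tensor X Y) (Dmap (\<lambda>(x, y). tens X Y x y) r)"
proof -
  have fin: "finite (supp r)" by (rule DistD(2)[OF r])
  have "Dmap (\<lambda>(x, y). tens X Y x y) r = Dmap (tensor_class X Y) (Dmap delta r)"
    by (simp add: Dmap_comp[OF fin] tens_eq_tensor_class case_prod_beta')
  moreover have "Dmap delta r \<in> Dist (Dist (carr X \<times> carr Y))"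
    by (rule Dmap_in_Dist[OF r delta_in_Dist])
  ultimately show ?thesis
    using bary_tensor_class[OF X Y] Dmu_Dmap_delta[OF fin, of "\<lambda>x. x"] Dmap_id[OF fin] by simp
qed

lemma convex_set_tensor:
  assumes X: "convex_set X" and Y: "convex_set Y"
  shows "convex_set (tensor X Y)"
  unfolding convex_set_def
proof (intro conjI ballI)
  let ?T = "tensor X Y" and ?cls = "tensor_class X Y"
  fix p assume "p \<in> Dist (carr ?T)"
  then show "bary ?T p \<in> carr ?T"
    unfolding bary_tensor by (intro tensor_class_in Dmu_in_Dist Dmap_some_elem_in_Dist[OF X Y])
next
  let ?T = "tensor X Y"
  fix c assume "c \<in> carr ?T"
  then show "bary ?T (delta c) = c"
    unfolding bary_tensor Dmap_delta Dmu_delta by (rule tensor_class_some_elem[OF X Y])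
next
  let ?T = "tensor X Y" and ?cls = "tensor_class X Y"
  fix PP assume PP: "PP \<in> Dist (Dist (carr ?T))"
  define P' where "P' = Dmap (Dmap some_elem) PP"
  have P': "P' \<in> Dist (Dist (Dist (carr X \<times> carr Y)))"
    unfolding P'_def by (rule Dmap_in_Dist[OF PP Dmap_some_elem_in_Dist[OF X Y]])
  have finP': "finite (supp P')" by (rule DistD(2)[OF P'])
  have PP_eq: "Dmap (Dmap ?cls) P' = PP"
    unfolding P'_def Dmap_comp[OF DistD(2)[OF PP]] using Dmap_id[OF DistD(2)[OF PP]]
    by (simp add: Dmap_tensor_class_some_elem[OF X Y Dist_suppD[OF PP]] cong: Dmap_cong)
  have "bary ?T (Dmu PP) = bary ?T (Dmap ?cls (Dmu P'))"
    by (simp add: Dmap_Dmu[OF P'] flip: PP_eq)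
  also have "\<dots> = ?cls (Dmu (Dmap Dmu P'))"
    by (simp add: bary_tensor_class[OF X Y Dmu_in_Dist[OF P']] Dmu_Dmu[OF P'])
  also have "\<dots> = bary ?T (Dmap ?cls (Dmap Dmu P'))"
    by (rule bary_tensor_class[OF X Y Dmap_in_Dist[OF P' Dmu_in_Dist], symmetric])
  also have "Dmap ?cls (Dmap Dmu P') = Dmap (bary ?T) (Dmap (Dmap ?cls) P')"
    using bary_tensor_class[OF X Y Dist_suppD[OF P']]
    by (simp add: Dmap_comp[OF finP'] cong: Dmap_cong)
  also note PP_eq
  finally show "bary ?T (Dmu PP) = bary ?T (Dmap (bary ?T) PP)" .
qed

lemma tensor_class_generator_left:
  assumes X: "convex_set X" and Y: "convex_set Y" and p: "p \<in> Dist (carr X)" and y: "y \<in> carr Y"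
  shows "tensor_class X Y (delta (bary X p, y)) = tensor_class X Y (Dmap (\<lambda>x. (x, y)) p)"
proof -
  have "(delta (bary X p, y), Dmap (\<lambda>x. (x, y)) p) \<in> tensor_gens X Y"
    unfolding tensor_gens_def using p y by blast
  then show ?thesis
    using tensor_gens_subset[OF X Y] tensor_gens_subset_tensor_rel tensor_class_eq_iff[OF X Y] by blast
qed

lemma tensor_class_generator_right:
  assumes X: "convex_set X" and Y: "convex_set Y" and x: "x \<in> carr X" and q: "q \<in> Dist (carr Y)"
  shows "tensor_class X Y (delta (x, bary Y q)) = tensor_class X Y (Dmap (\<lambda>y. (x, y)) q)"
proof -
  have "(delta (x, bary Y q), Dmap (\<lambda>y. (x, y)) q) \<in> tensor_gens X Y"
    unfolding tensor_gens_def using x q by blast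
  then show ?thesis
    using tensor_gens_subset[OF X Y] tensor_gens_subset_tensor_rel tensor_class_eq_iff[OF X Y] by blast
qed

lemma biconvex_tens:
  assumes X: "convex_set X" and Y: "convex_set Y"
  shows "biconvex X Y (tensor X Y) (tens X Y)"
proof (rule biconvexI)
  let ?T = "tensor X Y" and ?cls = "tensor_class X Y"
  show "\<And>x y. x \<in> carr X \<Longrightarrow> y \<in> carr Y \<Longrightarrow> tens X Y x y \<in> carr ?T" by (rule tens_in)
  fix p q assume p: "p \<in> Dist (carr X)" and q: "q \<in> Dist (carr Y)"
  have finp: "finite (supp p)" and finq: "finite (supp q)" using p q by (simp_all add: DistD(2))
  have by_in: "bary Y q \<in> carr Y" by (rule convex_set_bary_in[OF Y q])
  define P1 where "P1 = Dmap (\<lambda>x. delta (x, bary Y q)) p"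
  define P2 where "P2 = Dmap (\<lambda>x. Dmap (\<lambda>y. (x, y)) q) p"
  have P1: "P1 \<in> Dist (Dist (carr X \<times> carr Y))"
    unfolding P1_def by (rule Dmap_in_Dist[OF p delta_in_Dist]) (simp add: by_in)
  have P2: "P2 \<in> Dist (Dist (carr X \<times> carr Y))"
    unfolding P2_def by (rule Dmap_in_Dist[OF p Dmap_in_Dist[OF q]]) simp
  have classes: "Dmap ?cls P1 = Dmap ?cls P2"
    unfolding P1_def P2_def Dmap_comp[OF finp]
    by (rule Dmap_cong) (rule tensor_class_generator_right[OF X Y Dist_suppD[OF p] q])
  have "tens X Y (bary X p) (bary Y q) = ?cls (Dmu P1)"
    unfolding tens_eq_tensor_class tensor_class_generator_left[OF X Y p by_in] P1_def
    by (simp add: Dmu_Dmap_delta[OF finp])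
  also have "\<dots> = ?cls (Dmu P2)"
    using bary_tensor_class[OF X Y P1] bary_tensor_class[OF X Y P2] classes by simp
  also have "Dmu P2 = prodist p q"
    unfolding P2_def Dmu_Dmap_Dmap_left[OF finp finq]
    using Dmap_id[of "prodist p q"] finp finq by (simp add: supp_prodist id_def)
  also have "?cls (prodist p q) = bary ?T (Dmap (\<lambda>(x, y). tens X Y x y) (prodist p q))"
    by (rule tensor_class_eq_bary_tens[OF X Y prodist_in_Dist[OF p q]])
  finally show "tens X Y (bary X p) (bary Y q) = bary ?T (Dmap (\<lambda>(x, y). tens X Y x y) (prodist p q))" .
qed

lemma convex_maps_tensor_eqI:
  assumes X: "convex_set X" and Y: "convex_set Y"
    and h1: "convex_map (tensor X Y) Z h1" and h2: "convex_map (tensor X Y) Z h2"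
    and eq: "\<And>x y. x \<in> carr X \<Longrightarrow> y \<in> carr Y \<Longrightarrow> h1 (tens X Y x y) = h2 (tens X Y x y)"
    and t: "t \<in> carr (tensor X Y)"
  shows "h1 t = h2 t"
proof -
  obtain r where r: "r \<in> Dist (carr X \<times> carr Y)" and tr: "t = tensor_class X Y r"
    by (rule tensor_cases[OF X Y t])
  have fin: "finite (supp r)" by (rule DistD(2)[OF r])
  have D: "Dmap (\<lambda>(x, y). tens X Y x y) r \<in> Dist (carr (tensor X Y))"
    by (rule Dmap_in_Dist[OF r]) (auto intro: tens_in)
  have "h (tensor_class X Y r) = bary Z (Dmap (\<lambda>(x, y). h (tens X Y x y)) r)"
    if h: "convex_map (tensor X Y) Z h" for h
    unfolding tensor_class_eq_bary_tens[OF X Y r] convex_map_bary[OF h D]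
    by (simp add: Dmap_comp[OF fin] case_prod_beta')
  moreover have "Dmap (\<lambda>(x, y). h1 (tens X Y x y)) r = Dmap (\<lambda>(x, y). h2 (tens X Y x y)) r"
    using Dist_suppD[OF r] eq by (intro Dmap_cong) auto
  ultimately show ?thesis using h1 h2 tr by metis
qed

lemma cset_congruence_kernel:
  assumes F: "\<And>P. P \<in> Dist (Dist A) \<Longrightarrow> F (Dmu P) = G (Dmap F P)"
  shows "cset_congruence (free_cset A) {(r, r'). r \<in> Dist A \<and> r' \<in> Dist A \<and> F r = F r'}"
    (is "cset_congruence _ ?K")
  unfolding cset_congruence_def
proof (intro conjI ballI impI)
  show "equiv (carr (free_cset A)) ?K"
    by (auto simp: equiv_def refl_on_def sym_def trans_def)
  fix P Q assume "P \<in> Dist (carr (free_cset A))" "Q \<in> Dist (carr (free_cset A))"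
    and PQ: "Dmap (\<lambda>x. ?K `` {x}) P = Dmap (\<lambda>x. ?K `` {x}) Q"
  then have P: "P \<in> Dist (Dist A)" and Q: "Q \<in> Dist (Dist A)" by simp_all
  have F_class: "F (some_elem (?K `` {r})) = F r" if "r \<in> Dist A" for r
  proof -
    define c where "c = ?K `` {r}"
    have "r \<in> c" using that by (simp add: c_def)
    then have "some_elem c \<in> c" unfolding some_elem_def by (rule someI[where P = "\<lambda>q. q \<in> c"])
    moreover have "\<forall>r' \<in> c. F r' = F r" by (auto simp: c_def)
    ultimately have "F (some_elem c) = F r" by blast
    then show ?thesis by (simp only: c_def)
  qed
  have "Dmap F M = Dmap (\<lambda>c. F (some_elem c)) (Dmap (\<lambda>x. ?K `` {x}) M)" if "M \<in> Dist (Dist A)" for M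
    using F_class Dist_suppD[OF that] by (simp add: Dmap_comp[OF DistD(2)[OF that]] cong: Dmap_cong)
  then have "Dmap F P = Dmap F Q" using P Q PQ by simp
  then have "F (Dmu P) = F (Dmu Q)" using F[OF P] F[OF Q] by simp
  then show "(bary (free_cset A) P, bary (free_cset A) Q) \<in> ?K"
    using Dmu_in_Dist[OF P] Dmu_in_Dist[OF Q] by simp
qed

lemma biconvex_tensor_gens_kernel:
  assumes X: "convex_set X" and Y: "convex_set Y" and Z: "convex_set Z" and b: "biconvex X Y Z f"
    and g: "(r, r') \<in> tensor_gens X Y"
  shows "bary Z (Dmap (\<lambda>(x, y). f x y) r) = bary Z (Dmap (\<lambda>(x, y). f x y) r')"
proof -
  have F_delta: "bary Z (Dmap (\<lambda>(x, y). f x y) (delta (x, y))) = f x y"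
    if "x \<in> carr X" "y \<in> carr Y" for x y
    unfolding Dmap_delta using biconvex_in[OF b that] by (simp add: convex_set_bary_delta[OF Z])
  from g consider
      (left) p y where "r = delta (bary X p, y)" "r' = Dmap (\<lambda>x. (x, y)) p" "p \<in> Dist (carr X)" "y \<in> carr Y"
    | (right) x q where "r = delta (x, bary Y q)" "r' = Dmap (\<lambda>y. (x, y)) q" "x \<in> carr X" "q \<in> Dist (carr Y)"
    unfolding tensor_gens_def by blast
  then show ?thesis
  proof cases
    case left
    have "f (bary X p) y = bary Z (Dmap (\<lambda>x. f x y) p)"
      by (rule convex_map_bary[OF biconvex_convex_map_left[OF Y b left(4)] left(3)])
    then show ?thesis
      unfolding left(1,2) F_delta[OF convex_set_bary_in[OF X left(3)] left(4)]
      by (simp add: Dmap_comp[OF DistD(2)[OF left(3)]])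
  next
    case right
    have "f x (bary Y q) = bary Z (Dmap (f x) q)"
      by (rule convex_map_bary[OF biconvex_convex_map_right[OF X b right(3)] right(4)])
    then show ?thesis
      unfolding right(1,2) F_delta[OF right(3) convex_set_bary_in[OF Y right(4)]]
      by (simp add: Dmap_comp[OF DistD(2)[OF right(4)]])
  qed
qed

lemma biconvex_tensor_rel_kernel:
  assumes X: "convex_set X" and Y: "convex_set Y" and Z: "convex_set Z" and b: "biconvex X Y Z f"
    and rr': "(r, r') \<in> tensor_rel X Y"
  shows "bary Z (Dmap (\<lambda>(x, y). f x y) r) = bary Z (Dmap (\<lambda>(x, y). f x y) r')"
proof -
  let ?F = "\<lambda>r. bary Z (Dmap (\<lambda>(x, y). f x y) r)"
  let ?K = "{(r, r'). r \<in> Dist (carr X \<times> carr Y) \<and> r' \<in> Dist (carr X \<times> carr Y) \<and> ?F r = ?F r'}"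
  have "cset_congruence (free_cset (carr X \<times> carr Y)) ?K"
    by (rule cset_congruence_kernel[where G = "bary Z"], rule convex_set_bary_Dmap_Dmu[OF Z])
       (auto intro: biconvex_in[OF b])
  moreover have "tensor_gens X Y \<subseteq> ?K"
    using tensor_gens_subset[OF X Y] biconvex_tensor_gens_kernel[OF X Y Z b] by auto
  ultimately show ?thesis using tensor_rel_least rr' by blast
qed

definition tensor_lift :: "'x cset \<Rightarrow> 'y cset \<Rightarrow> 'z cset \<Rightarrow> ('x \<Rightarrow> 'y \<Rightarrow> 'z) \<Rightarrow> ('x \<times> 'y \<Rightarrow> real) set \<Rightarrow> 'z" where
  "tensor_lift X Y Z f = (THE h. h \<in> extensional (carr (tensor X Y)) \<and> convex_map (tensor X Y) Z h \<and>
      (\<forall>x\<in>carr X. \<forall>y\<in>carr Y. h (tens X Y x y) = f x y))"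

lemma tensor_lift_exists:
  assumes X: "convex_set X" and Y: "convex_set Y" and Z: "convex_set Z" and b: "biconvex X Y Z f"
  shows "\<exists>h. h \<in> extensional (carr (tensor X Y)) \<and> convex_map (tensor X Y) Z h \<and>
              (\<forall>x\<in>carr X. \<forall>y\<in>carr Y. h (tens X Y x y) = f x y)"
proof (intro exI conjI ballI)
  let ?T = "tensor X Y" and ?F = "\<lambda>r. bary Z (Dmap (\<lambda>(x, y). f x y) r)"
  define h where "h = restrict (\<lambda>t. ?F (some_elem t)) (carr ?T)"
  have F_in: "?F r \<in> carr Z" if "r \<in> Dist (carr X \<times> carr Y)" for r
    by (rule convex_set_bary_in[OF Z Dmap_in_Dist[OF that]]) (auto intro: biconvex_in[OF b])
  have h_class: "h (tensor_class X Y r) = ?F r" if r: "r \<in> Dist (carr X \<times> carr Y)" for r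
  proof -
    have "(some_elem (tensor_class X Y r), r) \<in> tensor_rel X Y"
      using tensor_class_some_elem[OF X Y tensor_class_in[OF r]]
        tensor_class_eq_iff[OF X Y some_elem_tensor_in[OF X Y tensor_class_in[OF r]] r] by simp
    then show ?thesis
      unfolding h_def using tensor_class_in[OF r] biconvex_tensor_rel_kernel[OF X Y Z b] by simp
  qed
  show "h \<in> extensional (carr ?T)" unfolding h_def by simp
  show "convex_map ?T Z h"
  proof (rule convex_mapI)
    fix t assume "t \<in> carr ?T"
    then show "h t \<in> carr Z" unfolding h_def by (simp add: F_in some_elem_tensor_in[OF X Y])
  next
    fix P assume P: "P \<in> Dist (carr ?T)"
    note P' = Dmap_some_elem_in_Dist[OF X Y P]
    have "h (bary ?T P) = bary Z (Dmap ?F (Dmap some_elem P))"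
      unfolding bary_tensor h_class[OF Dmu_in_Dist[OF P']]
      by (rule convex_set_bary_Dmap_Dmu[OF Z _ P']) (auto intro: biconvex_in[OF b])
    also have "Dmap ?F (Dmap some_elem P) = Dmap h P"
      unfolding Dmap_comp[OF DistD(2)[OF P]] by (rule Dmap_cong) (simp add: h_def Dist_suppD[OF P])
    finally show "h (bary ?T P) = bary Z (Dmap h P)" .
  qed
  fix x y assume "x \<in> carr X" "y \<in> carr Y"
  then show "h (tens X Y x y) = f x y"
    unfolding tens_eq_tensor_class
    by (simp add: h_class delta_in_Dist Dmap_delta convex_set_bary_delta[OF Z] biconvex_in[OF b])
qed

lemma theI_extensional:
  assumes "P h" and "\<And>h. P h \<Longrightarrow> h \<in> extensional S"
    and "\<And>h h' t. P h \<Longrightarrow> P h' \<Longrightarrow> t \<in> S \<Longrightarrow> h t = h' t"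
  shows "P (THE h. P h)"
proof (rule theI[of P h])
  show "P h" by fact
  fix h' assume h': "P h'"
  show "h' = h"
  proof (rule extensionalityI)
    show "h' \<in> extensional S" by (rule assms(2)[OF h'])
    show "h \<in> extensional S" by (rule assms(2)[OF assms(1)])
    show "\<And>t. t \<in> S \<Longrightarrow> h' t = h t" by (rule assms(3)[OF h' assms(1)])
  qed
qed

lemma
  assumes X: "convex_set X" and Y: "convex_set Y" and Z: "convex_set Z" and b: "biconvex X Y Z f"
  shows tensor_lift_extensional: "tensor_lift X Y Z f \<in> extensional (carr (tensor X Y))"
    and convex_map_tensor_lift: "convex_map (tensor X Y) Z (tensor_lift X Y Z f)"
    and tensor_lift_tens:
      "\<And>x y. x \<in> carr X \<Longrightarrow> y \<in> carr Y \<Longrightarrow> tensor_lift X Y Z f (tens X Y x y) = f x y"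
proof -
  let ?P = "\<lambda>h. h \<in> extensional (carr (tensor X Y)) \<and> convex_map (tensor X Y) Z h \<and>
              (\<forall>x\<in>carr X. \<forall>y\<in>carr Y. h (tens X Y x y) = f x y)"
  obtain h where "?P h" using tensor_lift_exists[OF X Y Z b] by blast
  then have "?P (THE h. ?P h)"
  proof (rule theI_extensional[where P = ?P])
    fix h h' t assume h: "?P h" and h': "?P h'" and t: "t \<in> carr (tensor X Y)"
    show "h t = h' t"
      by (rule convex_maps_tensor_eqI[OF X Y conjunct1[OF conjunct2[OF h]] conjunct1[OF conjunct2[OF h']] _ t])
         (simp add: conjunct2[OF conjunct2[OF h]] conjunct2[OF conjunct2[OF h']])
  qed (rule conjunct1)
  then have "?P (tensor_lift X Y Z f)" unfolding tensor_lift_def .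
  then show "tensor_lift X Y Z f \<in> extensional (carr (tensor X Y))"
    and "convex_map (tensor X Y) Z (tensor_lift X Y Z f)"
    and "\<And>x y. x \<in> carr X \<Longrightarrow> y \<in> carr Y \<Longrightarrow> tensor_lift X Y Z f (tens X Y x y) = f x y"
    by blast+
qed

lemma tensor_lift_unique:
  assumes X: "convex_set X" and Y: "convex_set Y" and Z: "convex_set Z" and b: "biconvex X Y Z f"
    and h: "convex_map (tensor X Y) Z h" "h \<in> extensional (carr (tensor X Y))"
    and hf: "\<And>x y. x \<in> carr X \<Longrightarrow> y \<in> carr Y \<Longrightarrow> h (tens X Y x y) = f x y"
  shows "tensor_lift X Y Z f = h"
  by (rule extensionalityI[OF tensor_lift_extensional[OF X Y Z b] h(2)])
     (rule convex_maps_tensor_eqI[OF X Y convex_map_tensor_lift[OF X Y Z b] h(1)],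
      simp_all add: tensor_lift_tens[OF X Y Z b] hf)

section \<open>Unit, tensor of maps, unitors and associator\<close>

lemma carr_unitC [simp]: "carr unitC = {()}"
  by (simp add: unitC_def)

lemma convex_set_unitC: "convex_set unitC"
  by (simp add: convex_set_def unitC_def)

lemma
  assumes X: "convex_set X" and Y: "convex_set Y" and X': "convex_set X'" and Y': "convex_set Y'"
    and f: "convex_map X X' f" and g: "convex_map Y Y' g"
  shows convex_map_tmap: "convex_map (tensor X Y) (tensor X' Y') (tmap X Y X' Y' f g)"
    and tmap_tens:
      "\<And>x y. x \<in> carr X \<Longrightarrow> y \<in> carr Y \<Longrightarrow> tmap X Y X' Y' f g (tens X Y x y) = tens X' Y' (f x) (g y)"
proof -
  have tmap: "tmap X Y X' Y' f g = tensor_lift X Y (tensor X' Y') (\<lambda>x y. tens X' Y' (f x) (g y))"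
    by (simp add: tmap_def tensor_lift_def)
  note b = biconvex_comp_convex_maps[OF biconvex_tens[OF X' Y'] f g]
  show "convex_map (tensor X Y) (tensor X' Y') (tmap X Y X' Y' f g)"
    unfolding tmap by (rule convex_map_tensor_lift[OF X Y convex_set_tensor[OF X' Y'] b])
  show "\<And>x y. x \<in> carr X \<Longrightarrow> y \<in> carr Y \<Longrightarrow> tmap X Y X' Y' f g (tens X Y x y) = tens X' Y' (f x) (g y)"
    unfolding tmap by (rule tensor_lift_tens[OF X Y convex_set_tensor[OF X' Y'] b])
qed

lemma
  assumes X: "convex_set X"
  shows convex_map_lunit: "convex_map (tensor unitC X) X (lunit X)"
    and lunit_tens: "\<And>x. x \<in> carr X \<Longrightarrow> lunit X (tens unitC X () x) = x"
proof -
  have lunit: "lunit X = tensor_lift unitC X X (\<lambda>u x. x)"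
    by (simp add: lunit_def tensor_lift_def)
  have b: "biconvex unitC X X (\<lambda>u x. x)"
  proof (rule biconvexI)
    fix p q assume p: "p \<in> Dist (carr unitC)" and q: "q \<in> Dist (carr X)"
    have "Dmap (\<lambda>(u, x). x) (prodist p q) = Dmap snd (prodist p q)"
      by (rule Dmap_cong) (auto split: prod.splits)
    then show "bary X q = bary X (Dmap (\<lambda>(u, x). x) (prodist p q))"
      by (simp add: Dmap_snd_prodist[OF p DistD(2)[OF q]])
  qed simp
  show "convex_map (tensor unitC X) X (lunit X)"
    unfolding lunit by (rule convex_map_tensor_lift[OF convex_set_unitC X X b])
  show "\<And>x. x \<in> carr X \<Longrightarrow> lunit X (tens unitC X () x) = x"
    unfolding lunit by (rule tensor_lift_tens[OF convex_set_unitC X X b]) simp_all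
qed

lemma
  assumes X: "convex_set X"
  shows convex_map_runit: "convex_map (tensor X unitC) X (runit X)"
    and runit_tens: "\<And>x. x \<in> carr X \<Longrightarrow> runit X (tens X unitC x ()) = x"
proof -
  have runit: "runit X = tensor_lift X unitC X (\<lambda>x u. x)"
    by (simp add: runit_def tensor_lift_def)
  have b: "biconvex X unitC X (\<lambda>x u. x)"
  proof (rule biconvexI)
    fix p q assume p: "p \<in> Dist (carr X)" and q: "q \<in> Dist (carr unitC)"
    have "Dmap (\<lambda>(x, u). x) (prodist p q) = Dmap fst (prodist p q)"
      by (rule Dmap_cong) (auto split: prod.splits)
    then show "bary X p = bary X (Dmap (\<lambda>(x, u). x) (prodist p q))"
      by (simp add: Dmap_fst_prodist[OF DistD(2)[OF p] q])
  qed simp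
  show "convex_map (tensor X unitC) X (runit X)"
    unfolding runit by (rule convex_map_tensor_lift[OF X convex_set_unitC X b])
  show "\<And>x. x \<in> carr X \<Longrightarrow> runit X (tens X unitC x ()) = x"
    unfolding runit by (rule tensor_lift_tens[OF X convex_set_unitC X b]) simp_all
qed

lemma convex_maps_tensor3_eqI:
  assumes X: "convex_set X" and Y: "convex_set Y" and Z: "convex_set Z"
    and h1: "convex_map (tensor (tensor X Y) Z) W h1" and h2: "convex_map (tensor (tensor X Y) Z) W h2"
    and eq: "\<And>x y z. x \<in> carr X \<Longrightarrow> y \<in> carr Y \<Longrightarrow> z \<in> carr Z \<Longrightarrow>
       h1 (tens (tensor X Y) Z (tens X Y x y) z) = h2 (tens (tensor X Y) Z (tens X Y x y) z)"
    and t: "t \<in> carr (tensor (tensor X Y) Z)"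
  shows "h1 t = h2 t"
proof (rule convex_maps_tensor_eqI[OF convex_set_tensor[OF X Y] Z h1 h2 _ t])
  fix u z assume u: "u \<in> carr (tensor X Y)" and z: "z \<in> carr Z"
  have c: "convex_map (tensor X Y) (tensor (tensor X Y) Z) (\<lambda>u. tens (tensor X Y) Z u z)"
    by (rule biconvex_convex_map_left[OF Z biconvex_tens[OF convex_set_tensor[OF X Y] Z] z])
  show "h1 (tens (tensor X Y) Z u z) = h2 (tens (tensor X Y) Z u z)"
    by (rule convex_maps_tensor_eqI[OF X Y convex_map_comp[OF c h1] convex_map_comp[OF c h2] _ u])
       (rule eq[OF _ _ z])
qed

text \<open>assoc_curried X Y Z u z is \<alpha>(u \<otimes> z); the associator is obtained by lifting it in u and z.\<close>

definition assoc_curried :: "'a cset \<Rightarrow> 'b cset \<Rightarrow> 'c cset \<Rightarrow> ('a \<times> 'b \<Rightarrow> real) set \<Rightarrow> 'c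
    \<Rightarrow> ('a \<times> ('b \<times> 'c \<Rightarrow> real) set \<Rightarrow> real) set" where
  "assoc_curried X Y Z u z =
     tensor_lift X Y (tensor X (tensor Y Z)) (\<lambda>x y. tens X (tensor Y Z) x (tens Y Z y z)) u"

lemma
  assumes X: "convex_set X" and Y: "convex_set Y" and Z: "convex_set Z" and z: "z \<in> carr Z"
  shows convex_map_assoc_curried:
      "convex_map (tensor X Y) (tensor X (tensor Y Z)) (\<lambda>u. assoc_curried X Y Z u z)"
    and assoc_curried_tens: "\<And>x y. x \<in> carr X \<Longrightarrow> y \<in> carr Y \<Longrightarrow>
      assoc_curried X Y Z (tens X Y x y) z = tens X (tensor Y Z) x (tens Y Z y z)"
proof -
  have YZ: "convex_set (tensor Y Z)" by (rule convex_set_tensor[OF Y Z])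
  have b: "biconvex X Y (tensor X (tensor Y Z)) (\<lambda>x y. tens X (tensor Y Z) x (tens Y Z y z))"
    using biconvex_comp_convex_maps[OF biconvex_tens[OF X YZ] convex_map_id
        biconvex_convex_map_left[OF Z biconvex_tens[OF Y Z] z]] by simp
  show "convex_map (tensor X Y) (tensor X (tensor Y Z)) (\<lambda>u. assoc_curried X Y Z u z)"
    unfolding assoc_curried_def by (rule convex_map_tensor_lift[OF X Y convex_set_tensor[OF X YZ] b])
  show "\<And>x y. x \<in> carr X \<Longrightarrow> y \<in> carr Y \<Longrightarrow>
      assoc_curried X Y Z (tens X Y x y) z = tens X (tensor Y Z) x (tens Y Z y z)"
    unfolding assoc_curried_def by (rule tensor_lift_tens[OF X Y convex_set_tensor[OF X YZ] b])
qed

text \<open>Convexity in z is checked on a representative r of u, where the map is a mixture of maps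
  that are convex in z.\<close>

lemma biconvex_assoc_curried:
  assumes X: "convex_set X" and Y: "convex_set Y" and Z: "convex_set Z"
  shows "biconvex (tensor X Y) Z (tensor X (tensor Y Z)) (assoc_curried X Y Z)"
proof (rule biconvexI_separately[OF Z])
  let ?XY = "tensor X Y" and ?YZ = "tensor Y Z" and ?V = "tensor X (tensor Y Z)"
  have YZ: "convex_set ?YZ" by (rule convex_set_tensor[OF Y Z])
  show V: "convex_set ?V" by (rule convex_set_tensor[OF X YZ])
  show "\<And>z. z \<in> carr Z \<Longrightarrow> convex_map ?XY ?V (\<lambda>u. assoc_curried X Y Z u z)"
    by (rule convex_map_assoc_curried[OF X Y Z])
  fix u assume u: "u \<in> carr ?XY"
  show "\<And>z. z \<in> carr Z \<Longrightarrow> assoc_curried X Y Z u z \<in> carr ?V"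
    by (rule convex_map_in[OF convex_map_assoc_curried[OF X Y Z] u])
  obtain r where r: "r \<in> Dist (carr X \<times> carr Y)" and ur: "u = tensor_class X Y r"
    by (rule tensor_cases[OF X Y u])
  define k where "k a z = tens X ?YZ (fst a) (tens Y Z (snd a) z)" for a z
  have k: "convex_map Z ?V (k a)" if a: "a \<in> carr X \<times> carr Y" for a
  proof -
    have "convex_map Z ?YZ (tens Y Z (snd a))"
      by (rule biconvex_convex_map_right[OF Y biconvex_tens[OF Y Z]]) (use a in auto)
    moreover have "convex_map ?YZ ?V (tens X ?YZ (fst a))"
      by (rule biconvex_convex_map_right[OF X biconvex_tens[OF X YZ]]) (use a in auto)
    ultimately show ?thesis unfolding k_def by (rule convex_map_comp)
  qed
  have D: "Dmap (\<lambda>(x, y). tens X Y x y) r \<in> Dist (carr ?XY)"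
    by (rule Dmap_in_Dist[OF r]) (auto intro: tens_in)
  have "assoc_curried X Y Z u z = bary ?V (Dmap (\<lambda>a. k a z) r)" if z: "z \<in> carr Z" for z
  proof -
    have "assoc_curried X Y Z u z
        = bary ?V (Dmap (\<lambda>a. assoc_curried X Y Z (case a of (x, y) \<Rightarrow> tens X Y x y) z) r)"
      unfolding ur tensor_class_eq_bary_tens[OF X Y r]
        convex_map_bary[OF convex_map_assoc_curried[OF X Y Z z] D] Dmap_comp[OF DistD(2)[OF r]] ..
    also have "Dmap (\<lambda>a. assoc_curried X Y Z (case a of (x, y) \<Rightarrow> tens X Y x y) z) r = Dmap (\<lambda>a. k a z) r"
    proof (rule Dmap_cong)
      fix a assume "a \<in> supp r"
      then have "a \<in> carr X \<times> carr Y" by (rule Dist_suppD[OF r])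
      then show "assoc_curried X Y Z (case a of (x, y) \<Rightarrow> tens X Y x y) z = k a z"
        by (auto simp: k_def assoc_curried_tens[OF X Y Z z])
    qed
    finally show ?thesis .
  qed
  then show "convex_map Z ?V (assoc_curried X Y Z u)"
    by (intro convex_map_cong[OF Z convex_map_mixture[OF Z V r k]]) simp_all
qed

lemma assocm_characterization:
  assumes X: "convex_set X" and Y: "convex_set Y" and Z: "convex_set Z"
  shows "assocm X Y Z \<in> extensional (carr (tensor (tensor X Y) Z)) \<and>
      convex_map (tensor (tensor X Y) Z) (tensor X (tensor Y Z)) (assocm X Y Z) \<and>
      (\<forall>x\<in>carr X. \<forall>y\<in>carr Y. \<forall>z\<in>carr Z.
         assocm X Y Z (tens (tensor X Y) Z (tens X Y x y) z) = tens X (tensor Y Z) x (tens Y Z y z))"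
    (is "?P (assocm X Y Z)")
proof -
  have XY: "convex_set (tensor X Y)" by (rule convex_set_tensor[OF X Y])
  have V: "convex_set (tensor X (tensor Y Z))" by (rule convex_set_tensor[OF X convex_set_tensor[OF Y Z]])
  note b = biconvex_assoc_curried[OF X Y Z]
  have "?P (tensor_lift (tensor X Y) Z (tensor X (tensor Y Z)) (assoc_curried X Y Z))"
    using tensor_lift_extensional[OF XY Z V b] convex_map_tensor_lift[OF XY Z V b]
    by (simp add: tensor_lift_tens[OF XY Z V b] tens_in assoc_curried_tens[OF X Y Z])
  then have "?P (THE h. ?P h)"
  proof (rule theI_extensional[where P = ?P])
    fix h h' t assume h: "?P h" and h': "?P h'" and t: "t \<in> carr (tensor (tensor X Y) Z)"
    show "h t = h' t"
      by (rule convex_maps_tensor3_eqI[OF X Y Z conjunct1[OF conjunct2[OF h]]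
            conjunct1[OF conjunct2[OF h']] _ t])
         (simp add: conjunct2[OF conjunct2[OF h]] conjunct2[OF conjunct2[OF h']])
  qed (rule conjunct1)
  then show ?thesis unfolding assocm_def .
qed

lemma
  assumes "convex_set X" "convex_set Y" "convex_set Z"
  shows convex_map_assocm:
      "convex_map (tensor (tensor X Y) Z) (tensor X (tensor Y Z)) (assocm X Y Z)"
    and assocm_tens: "\<And>x y z. x \<in> carr X \<Longrightarrow> y \<in> carr Y \<Longrightarrow> z \<in> carr Z \<Longrightarrow>
      assocm X Y Z (tens (tensor X Y) Z (tens X Y x y) z) = tens X (tensor Y Z) x (tens Y Z y z)"
  using assocm_characterization[OF assms] by blast+

section \<open>Enriched categories and D-algebras in Cat\<close>

lemma carr_ehom [simp]: "carr (ehom E a b) = eHom E a b"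
  by (simp add: ehom_def)

lemma carr_dhom [simp]: "carr (dhom C a b) = dHom C a b"
  by (simp add: dhom_def)

lemma ecat_hom_convex:
  assumes "is_ecat E"
  shows "a \<in> eOb E \<Longrightarrow> b \<in> eOb E \<Longrightarrow> convex_set (ehom E a b)"
  using assms[unfolded is_ecat_def, THEN conjunct1] by blast

lemma ecat_comp_convex:
  assumes "is_ecat E"
  shows "a \<in> eOb E \<Longrightarrow> b \<in> eOb E \<Longrightarrow> c \<in> eOb E \<Longrightarrow>
      convex_map (tensor (ehom E b c) (ehom E a b)) (ehom E a c) (eM E a b c)"
  using assms[unfolded is_ecat_def, THEN conjunct2, THEN conjunct1] by blast

lemma ecat_unit_convex:
  assumes "is_ecat E"
  shows "a \<in> eOb E \<Longrightarrow> convex_map unitC (ehom E a a) (eJ E a)"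
  using assms[unfolded is_ecat_def, THEN conjunct2, THEN conjunct2, THEN conjunct1] by blast

lemma ecat_assoc:
  assumes "is_ecat E"
  shows "a \<in> eOb E \<Longrightarrow> b \<in> eOb E \<Longrightarrow> c \<in> eOb E \<Longrightarrow> d \<in> eOb E \<Longrightarrow>
      t \<in> carr (tensor (tensor (ehom E c d) (ehom E b c)) (ehom E a b)) \<Longrightarrow>
      eM E a b d (tmap (tensor (ehom E c d) (ehom E b c)) (ehom E a b) (ehom E b d) (ehom E a b)
                       (eM E b c d) (idm (ehom E a b)) t)
      = eM E a c d (tmap (ehom E c d) (tensor (ehom E b c) (ehom E a b)) (ehom E c d) (ehom E a c)
                       (idm (ehom E c d)) (eM E a b c) (assocm (ehom E c d) (ehom E b c) (ehom E a b) t))"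
  using assms[unfolded is_ecat_def, THEN conjunct2, THEN conjunct2, THEN conjunct2, THEN conjunct1] by blast

lemma ecat_left_unit:
  assumes "is_ecat E"
  shows "a \<in> eOb E \<Longrightarrow> b \<in> eOb E \<Longrightarrow> u \<in> carr (tensor unitC (ehom E a b)) \<Longrightarrow>
      eM E a b b (tmap unitC (ehom E a b) (ehom E b b) (ehom E a b) (eJ E b) (idm (ehom E a b)) u)
      = lunit (ehom E a b) u"
  using assms[unfolded is_ecat_def, THEN conjunct2, THEN conjunct2, THEN conjunct2, THEN conjunct2, THEN conjunct1] by blast

lemma ecat_right_unit:
  assumes "is_ecat E"
  shows "a \<in> eOb E \<Longrightarrow> b \<in> eOb E \<Longrightarrow> w \<in> carr (tensor (ehom E a b) unitC) \<Longrightarrow>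
      eM E a a b (tmap (ehom E a b) unitC (ehom E a b) (ehom E a a) (idm (ehom E a b)) (eJ E a) w)
      = runit (ehom E a b) w"
  using assms[unfolded is_ecat_def, THEN conjunct2, THEN conjunct2, THEN conjunct2, THEN conjunct2, THEN conjunct2, THEN conjunct1] by blast

lemma ecat_comp_undefined:
  assumes "is_ecat E"
  shows "\<not> (a \<in> eOb E \<and> b \<in> eOb E \<and> c \<in> eOb E \<and>
      s \<in> carr (tensor (ehom E b c) (ehom E a b))) \<Longrightarrow> eM E a b c s = undefined"
  using assms[unfolded is_ecat_def, THEN conjunct2, THEN conjunct2, THEN conjunct2, THEN conjunct2, THEN conjunct2, THEN conjunct2, THEN conjunct1] by blast

lemma ecat_unit_undefined:
  assumes "is_ecat E"
  shows "a \<notin> eOb E \<Longrightarrow> eJ E a = (\<lambda>_. undefined)"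
  using assms[unfolded is_ecat_def, THEN conjunct2, THEN conjunct2, THEN conjunct2, THEN conjunct2, THEN conjunct2, THEN conjunct2, THEN conjunct2] by blast

lemma dcat_hom_convex:
  assumes "is_dcat C"
  shows "a \<in> dOb C \<Longrightarrow> b \<in> dOb C \<Longrightarrow> convex_set (dhom C a b)"
  using assms[unfolded is_dcat_def, THEN conjunct1] by blast

lemma dcat_comp_in:
  assumes "is_dcat C"
  shows "a \<in> dOb C \<Longrightarrow> b \<in> dOb C \<Longrightarrow> c \<in> dOb C \<Longrightarrow>
      g \<in> dHom C b c \<Longrightarrow> f \<in> dHom C a b \<Longrightarrow> dComp C a b c g f \<in> dHom C a c"
  using assms[unfolded is_dcat_def, THEN conjunct2, THEN conjunct1] by blast

lemma dcat_id_in: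
  assumes "is_dcat C"
  shows "a \<in> dOb C \<Longrightarrow> dId C a \<in> dHom C a a"
  using assms[unfolded is_dcat_def, THEN conjunct2, THEN conjunct2, THEN conjunct1] by blast

lemma dcat_id_left:
  assumes "is_dcat C"
  shows "a \<in> dOb C \<Longrightarrow> b \<in> dOb C \<Longrightarrow> f \<in> dHom C a b \<Longrightarrow>
      dComp C a b b (dId C b) f = f"
  using assms[unfolded is_dcat_def, THEN conjunct2, THEN conjunct2, THEN conjunct2, THEN conjunct1] by blast

lemma dcat_id_right:
  assumes "is_dcat C"
  shows "a \<in> dOb C \<Longrightarrow> b \<in> dOb C \<Longrightarrow> f \<in> dHom C a b \<Longrightarrow>
      dComp C a a b f (dId C a) = f"
  using assms[unfolded is_dcat_def, THEN conjunct2, THEN conjunct2, THEN conjunct2, THEN conjunct1] by blast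

lemma dcat_assoc:
  assumes "is_dcat C"
  shows "a \<in> dOb C \<Longrightarrow> b \<in> dOb C \<Longrightarrow> c \<in> dOb C \<Longrightarrow> d \<in> dOb C \<Longrightarrow>
      f \<in> dHom C a b \<Longrightarrow> g \<in> dHom C b c \<Longrightarrow> h \<in> dHom C c d \<Longrightarrow>
      dComp C a c d h (dComp C a b c g f) = dComp C a b d (dComp C b c d h g) f"
  using assms[unfolded is_dcat_def, THEN conjunct2, THEN conjunct2, THEN conjunct2, THEN conjunct2, THEN conjunct1] by blast

lemma dcat_comp_biconvex:
  assumes "is_dcat C"
  shows "a \<in> dOb C \<Longrightarrow> b \<in> dOb C \<Longrightarrow> c \<in> dOb C \<Longrightarrow>
      biconvex (dhom C b c) (dhom C a b) (dhom C a c) (dComp C a b c)"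
  using assms[unfolded is_dcat_def, THEN conjunct2, THEN conjunct2, THEN conjunct2, THEN conjunct2, THEN conjunct2, THEN conjunct1] by blast

lemma dcat_comp_undefined:
  assumes "is_dcat C"
  shows "\<not> (a \<in> dOb C \<and> b \<in> dOb C \<and> c \<in> dOb C \<and> g \<in> dHom C b c \<and> f \<in> dHom C a b) \<Longrightarrow>
      dComp C a b c g f = undefined"
  using assms[unfolded is_dcat_def, THEN conjunct2, THEN conjunct2, THEN conjunct2, THEN conjunct2, THEN conjunct2, THEN conjunct2, THEN conjunct1] by blast

lemma dcat_id_undefined:
  assumes "is_dcat C"
  shows "a \<notin> dOb C \<Longrightarrow> dId C a = undefined"
  using assms[unfolded is_dcat_def, THEN conjunct2, THEN conjunct2, THEN conjunct2, THEN conjunct2, THEN conjunct2, THEN conjunct2, THEN conjunct2] by blast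

lemma is_ecatI:
  assumes "\<And>a b. a \<in> eOb E \<Longrightarrow> b \<in> eOb E \<Longrightarrow> convex_set (ehom E a b)"
    and "\<And>a b c. a \<in> eOb E \<Longrightarrow> b \<in> eOb E \<Longrightarrow> c \<in> eOb E \<Longrightarrow>
        convex_map (tensor (ehom E b c) (ehom E a b)) (ehom E a c) (eM E a b c)"
    and "\<And>a. a \<in> eOb E \<Longrightarrow> convex_map unitC (ehom E a a) (eJ E a)"
    and "\<And>a b c d t. a \<in> eOb E \<Longrightarrow> b \<in> eOb E \<Longrightarrow> c \<in> eOb E \<Longrightarrow> d \<in> eOb E \<Longrightarrow>
       t \<in> carr (tensor (tensor (ehom E c d) (ehom E b c)) (ehom E a b)) \<Longrightarrow>
         eM E a b d (tmap (tensor (ehom E c d) (ehom E b c)) (ehom E a b) (ehom E b d) (ehom E a b)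
                        (eM E b c d) (idm (ehom E a b)) t)
       = eM E a c d (tmap (ehom E c d) (tensor (ehom E b c) (ehom E a b)) (ehom E c d) (ehom E a c)
                        (idm (ehom E c d)) (eM E a b c)
                        (assocm (ehom E c d) (ehom E b c) (ehom E a b) t))"
    and "\<And>a b t. a \<in> eOb E \<Longrightarrow> b \<in> eOb E \<Longrightarrow> t \<in> carr (tensor unitC (ehom E a b)) \<Longrightarrow>
         eM E a b b (tmap unitC (ehom E a b) (ehom E b b) (ehom E a b) (eJ E b) (idm (ehom E a b)) t)
       = lunit (ehom E a b) t"
    and "\<And>a b t. a \<in> eOb E \<Longrightarrow> b \<in> eOb E \<Longrightarrow> t \<in> carr (tensor (ehom E a b) unitC) \<Longrightarrow>
         eM E a a b (tmap (ehom E a b) unitC (ehom E a b) (ehom E a a) (idm (ehom E a b)) (eJ E a) t)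
       = runit (ehom E a b) t"
    and "\<And>a b c t. \<not> (a \<in> eOb E \<and> b \<in> eOb E \<and> c \<in> eOb E \<and>
                   t \<in> carr (tensor (ehom E b c) (ehom E a b))) \<Longrightarrow> eM E a b c t = undefined"
    and "\<And>a. a \<notin> eOb E \<Longrightarrow> eJ E a = (\<lambda>_. undefined)"
  shows "is_ecat E"
  unfolding is_ecat_def by (intro conjI ballI allI impI; (rule assms; assumption)?)

lemma is_dcatI:
  assumes "\<And>a b. a \<in> dOb C \<Longrightarrow> b \<in> dOb C \<Longrightarrow> convex_set (dhom C a b)"
    and "\<And>a b c g f. a \<in> dOb C \<Longrightarrow> b \<in> dOb C \<Longrightarrow> c \<in> dOb C \<Longrightarrow> g \<in> dHom C b c \<Longrightarrow> f \<in> dHom C a b \<Longrightarrow>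
       dComp C a b c g f \<in> dHom C a c"
    and "\<And>a. a \<in> dOb C \<Longrightarrow> dId C a \<in> dHom C a a"
    and "\<And>a b f. a \<in> dOb C \<Longrightarrow> b \<in> dOb C \<Longrightarrow> f \<in> dHom C a b \<Longrightarrow> dComp C a b b (dId C b) f = f"
    and "\<And>a b f. a \<in> dOb C \<Longrightarrow> b \<in> dOb C \<Longrightarrow> f \<in> dHom C a b \<Longrightarrow> dComp C a a b f (dId C a) = f"
    and "\<And>a b c d f g h. a \<in> dOb C \<Longrightarrow> b \<in> dOb C \<Longrightarrow> c \<in> dOb C \<Longrightarrow> d \<in> dOb C \<Longrightarrow>
       f \<in> dHom C a b \<Longrightarrow> g \<in> dHom C b c \<Longrightarrow> h \<in> dHom C c d \<Longrightarrow>
       dComp C a c d h (dComp C a b c g f) = dComp C a b d (dComp C b c d h g) f"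
    and "\<And>a b c. a \<in> dOb C \<Longrightarrow> b \<in> dOb C \<Longrightarrow> c \<in> dOb C \<Longrightarrow>
       biconvex (dhom C b c) (dhom C a b) (dhom C a c) (dComp C a b c)"
    and "\<And>a b c g f. \<not> (a \<in> dOb C \<and> b \<in> dOb C \<and> c \<in> dOb C \<and> g \<in> dHom C b c \<and> f \<in> dHom C a b)
       \<Longrightarrow> dComp C a b c g f = undefined"
    and "\<And>a. a \<notin> dOb C \<Longrightarrow> dId C a = undefined"
  shows "is_dcat C"
  unfolding is_dcat_def by (intro conjI ballI allI impI; (rule assms; assumption)?)

lemma efun_obj_in: "is_efun E E' Fo Fh \<Longrightarrow> a \<in> eOb E \<Longrightarrow> Fo a \<in> eOb E'"
  unfolding is_efun_def by blast

lemma efun_convex_map: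
  "is_efun E E' Fo Fh \<Longrightarrow> a \<in> eOb E \<Longrightarrow> b \<in> eOb E \<Longrightarrow>
   convex_map (ehom E a b) (ehom E' (Fo a) (Fo b)) (Fh a b)"
  unfolding is_efun_def by blast

lemma efun_comp:
  "is_efun E E' Fo Fh \<Longrightarrow> a \<in> eOb E \<Longrightarrow> b \<in> eOb E \<Longrightarrow> c \<in> eOb E \<Longrightarrow>
   t \<in> carr (tensor (ehom E b c) (ehom E a b)) \<Longrightarrow>
   Fh a c (eM E a b c t) = eM E' (Fo a) (Fo b) (Fo c)
     (tmap (ehom E b c) (ehom E a b) (ehom E' (Fo b) (Fo c)) (ehom E' (Fo a) (Fo b)) (Fh b c) (Fh a b) t)"
  unfolding is_efun_def by blast

lemma efun_unit: "is_efun E E' Fo Fh \<Longrightarrow> a \<in> eOb E \<Longrightarrow> Fh a a (eJ E a ()) = eJ E' (Fo a) ()"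
  unfolding is_efun_def by blast

lemma efun_obj_undefined: "is_efun E E' Fo Fh \<Longrightarrow> a \<notin> eOb E \<Longrightarrow> Fo a = undefined"
  unfolding is_efun_def by blast

lemma efun_hom_undefined:
  "is_efun E E' Fo Fh \<Longrightarrow> \<not> (a \<in> eOb E \<and> b \<in> eOb E \<and> f \<in> eHom E a b) \<Longrightarrow> Fh a b f = undefined"
  unfolding is_efun_def by blast

lemma dfun_obj_in: "is_dfun C C' Fo Fh \<Longrightarrow> a \<in> dOb C \<Longrightarrow> Fo a \<in> dOb C'"
  unfolding is_dfun_def by blast

lemma dfun_comp:
  "is_dfun C C' Fo Fh \<Longrightarrow> a \<in> dOb C \<Longrightarrow> b \<in> dOb C \<Longrightarrow> c \<in> dOb C \<Longrightarrow> g \<in> dHom C b c \<Longrightarrow>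
   f \<in> dHom C a b \<Longrightarrow> Fh a c (dComp C a b c g f) = dComp C' (Fo a) (Fo b) (Fo c) (Fh b c g) (Fh a b f)"
  unfolding is_dfun_def by blast

lemma dfun_id: "is_dfun C C' Fo Fh \<Longrightarrow> a \<in> dOb C \<Longrightarrow> Fh a a (dId C a) = dId C' (Fo a)"
  unfolding is_dfun_def by blast

lemma dfun_convex_map:
  "is_dfun C C' Fo Fh \<Longrightarrow> a \<in> dOb C \<Longrightarrow> b \<in> dOb C \<Longrightarrow>
   convex_map (dhom C a b) (dhom C' (Fo a) (Fo b)) (Fh a b)"
  unfolding is_dfun_def by blast

lemma dfun_obj_undefined: "is_dfun C C' Fo Fh \<Longrightarrow> a \<notin> dOb C \<Longrightarrow> Fo a = undefined"
  unfolding is_dfun_def by blast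

lemma dfun_hom_undefined:
  "is_dfun C C' Fo Fh \<Longrightarrow> \<not> (a \<in> dOb C \<and> b \<in> dOb C \<and> f \<in> dHom C a b) \<Longrightarrow> Fh a b f = undefined"
  unfolding is_dfun_def by blast

definition dcat_of_ecat :: "('o, 'h) ecat \<Rightarrow> ('o, 'h) dcat" where
  "dcat_of_ecat E = \<lparr>dOb = eOb E, dHom = eHom E, dBary = eBary E,
     dComp = (\<lambda>a b c g f. if a \<in> eOb E \<and> b \<in> eOb E \<and> c \<in> eOb E \<and> g \<in> eHom E b c \<and> f \<in> eHom E a b
                then eM E a b c (tens (ehom E b c) (ehom E a b) g f) else undefined),
     dId = (\<lambda>a. eJ E a ())\<rparr>"

lemma dcat_of_ecat_simps [simp]:
  "dOb (dcat_of_ecat E) = eOb E" "dHom (dcat_of_ecat E) = eHom E" "dBary (dcat_of_ecat E) = eBary E"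
  "dId (dcat_of_ecat E) a = eJ E a ()" "dhom (dcat_of_ecat E) a b = ehom E a b"
  by (simp_all add: dcat_of_ecat_def dhom_def ehom_def)

lemma dComp_dcat_of_ecat:
  "a \<in> eOb E \<Longrightarrow> b \<in> eOb E \<Longrightarrow> c \<in> eOb E \<Longrightarrow> g \<in> eHom E b c \<Longrightarrow> f \<in> eHom E a b \<Longrightarrow>
   dComp (dcat_of_ecat E) a b c g f = eM E a b c (tens (ehom E b c) (ehom E a b) g f)"
  by (simp add: dcat_of_ecat_def)

lemma ecat_unit_in: "is_ecat E \<Longrightarrow> a \<in> eOb E \<Longrightarrow> eJ E a () \<in> eHom E a a"
  using convex_map_in[OF ecat_unit_convex, of E a "()"] by simp

lemma ecat_comp_tens_in:
  assumes E: "is_ecat E" and obj: "a \<in> eOb E" "b \<in> eOb E" "c \<in> eOb E"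
    and g: "g \<in> eHom E b c" and f: "f \<in> eHom E a b"
  shows "eM E a b c (tens (ehom E b c) (ehom E a b) g f) \<in> eHom E a c"
  using convex_map_in[OF ecat_comp_convex[OF E obj] tens_in] g f by simp

lemma ecat_comp_unit_left:
  assumes E: "is_ecat E" and a: "a \<in> eOb E" and b: "b \<in> eOb E" and f: "f \<in> eHom E a b"
  shows "eM E a b b (tens (ehom E b b) (ehom E a b) (eJ E b ()) f) = f"
proof -
  let ?A = "ehom E a b"
  have A: "convex_set ?A" by (rule ecat_hom_convex[OF E a b])
  have "tens (ehom E b b) ?A (eJ E b ()) f
      = tmap unitC ?A (ehom E b b) ?A (eJ E b) (idm ?A) (tens unitC ?A () f)"
    using tmap_tens[OF convex_set_unitC A ecat_hom_convex[OF E b b] A ecat_unit_convex[OF E b]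
        convex_map_idm[OF A], of "()" f] f
    by (simp add: idm_def)
  then show ?thesis
    using ecat_left_unit[OF E a b tens_in] lunit_tens[OF A] f by simp
qed

lemma ecat_comp_unit_right:
  assumes E: "is_ecat E" and a: "a \<in> eOb E" and b: "b \<in> eOb E" and f: "f \<in> eHom E a b"
  shows "eM E a a b (tens (ehom E a b) (ehom E a a) f (eJ E a ())) = f"
proof -
  let ?A = "ehom E a b"
  have A: "convex_set ?A" by (rule ecat_hom_convex[OF E a b])
  have "tens ?A (ehom E a a) f (eJ E a ())
      = tmap ?A unitC ?A (ehom E a a) (idm ?A) (eJ E a) (tens ?A unitC f ())"
    using tmap_tens[OF A convex_set_unitC A ecat_hom_convex[OF E a a] convex_map_idm[OF A]
        ecat_unit_convex[OF E a], of f "()"] f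
    by (simp add: idm_def)
  then show ?thesis
    using ecat_right_unit[OF E a b tens_in] runit_tens[OF A] f by simp
qed

lemma ecat_comp_tens_assoc:
  assumes E: "is_ecat E" and obj: "a \<in> eOb E" "b \<in> eOb E" "c \<in> eOb E" "d \<in> eOb E"
    and f: "f \<in> eHom E a b" and g: "g \<in> eHom E b c" and h: "h \<in> eHom E c d"
  shows "eM E a b d (tens (ehom E b d) (ehom E a b) (eM E b c d (tens (ehom E c d) (ehom E b c) h g)) f)
       = eM E a c d (tens (ehom E c d) (ehom E a c) h (eM E a b c (tens (ehom E b c) (ehom E a b) g f)))"
proof -
  let ?X1 = "ehom E c d" and ?X2 = "ehom E b c" and ?X3 = "ehom E a b"
  note H = ecat_hom_convex[OF E] and M = ecat_comp_convex[OF E]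
  have X1: "convex_set ?X1" and X2: "convex_set ?X2" and X3: "convex_set ?X3"
    using H obj by simp_all
  have hg: "tens ?X1 ?X2 h g \<in> carr (tensor ?X1 ?X2)" and gf: "tens ?X2 ?X3 g f \<in> carr (tensor ?X2 ?X3)"
    using f g h by (simp_all add: tens_in)
  define t where "t = tens (tensor ?X1 ?X2) ?X3 (tens ?X1 ?X2 h g) f"
  have t: "t \<in> carr (tensor (tensor ?X1 ?X2) ?X3)"
    unfolding t_def using hg f by (simp add: tens_in)
  have "tmap (tensor ?X1 ?X2) ?X3 (ehom E b d) ?X3 (eM E b c d) (idm ?X3) t
      = tens (ehom E b d) ?X3 (eM E b c d (tens ?X1 ?X2 h g)) f"
    unfolding t_def
    using tmap_tens[OF convex_set_tensor[OF X1 X2] X3 H[OF obj(2,4)] X3 M[OF obj(2-4)] convex_map_idm[OF X3] hg,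
        of f] f
    by (simp add: idm_def)
  moreover have "tmap ?X1 (tensor ?X2 ?X3) ?X1 (ehom E a c) (idm ?X1) (eM E a b c) (assocm ?X1 ?X2 ?X3 t)
      = tens ?X1 (ehom E a c) h (eM E a b c (tens ?X2 ?X3 g f))"
    unfolding t_def assocm_tens[OF X1 X2 X3 h[folded carr_ehom] g[folded carr_ehom] f[folded carr_ehom]]
    using tmap_tens[OF X1 convex_set_tensor[OF X2 X3] X1 H[OF obj(1,3)] convex_map_idm[OF X1] M[OF obj(1-3)], of h,
        OF _ gf] h
    by (simp add: idm_def)
  ultimately show ?thesis using ecat_assoc[OF E obj t] by simp
qed

lemma biconvex_ecat_comp_tens:
  assumes E: "is_ecat E" and obj: "a \<in> eOb E" "b \<in> eOb E" "c \<in> eOb E"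
  shows "biconvex (ehom E b c) (ehom E a b) (ehom E a c) (dComp (dcat_of_ecat E) a b c)"
  by (rule biconvex_cong[OF ecat_hom_convex[OF E obj(2,3)] ecat_hom_convex[OF E obj(1,2)]
        convex_map_comp_biconvex[OF biconvex_tens ecat_comp_convex[OF E obj]]])
     (simp_all add: dComp_dcat_of_ecat obj ecat_hom_convex[OF E])

lemma is_dcat_dcat_of_ecat:
  assumes E: "is_ecat E"
  shows "is_dcat (dcat_of_ecat E)"
proof (rule is_dcatI, unfold dcat_of_ecat_simps)
  show "\<And>a b c g f. \<not> (a \<in> eOb E \<and> b \<in> eOb E \<and> c \<in> eOb E \<and> g \<in> eHom E b c \<and> f \<in> eHom E a b) \<Longrightarrow>
      dComp (dcat_of_ecat E) a b c g f = undefined"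
    by (auto simp: dcat_of_ecat_def)
  show "\<And>a. a \<notin> eOb E \<Longrightarrow> eJ E a () = undefined" using ecat_unit_undefined[OF E] by simp
qed (simp_all add: E ecat_hom_convex ecat_unit_in ecat_comp_tens_in dComp_dcat_of_ecat
       ecat_comp_unit_left ecat_comp_unit_right ecat_comp_tens_assoc biconvex_ecat_comp_tens)

definition ecat_of_dcat :: "('o, 'h) dcat \<Rightarrow> ('o, 'h) ecat" where
  "ecat_of_dcat C = \<lparr>eOb = dOb C, eHom = dHom C, eBary = dBary C,
     eM = (\<lambda>a b c. if a \<in> dOb C \<and> b \<in> dOb C \<and> c \<in> dOb C
                then tensor_lift (dhom C b c) (dhom C a b) (dhom C a c) (dComp C a b c) else (\<lambda>_. undefined)),
     eJ = (\<lambda>a _. dId C a)\<rparr>"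

lemma ecat_of_dcat_simps [simp]:
  "eOb (ecat_of_dcat C) = dOb C" "eHom (ecat_of_dcat C) = dHom C" "eBary (ecat_of_dcat C) = dBary C"
  "eJ (ecat_of_dcat C) a = (\<lambda>_. dId C a)" "ehom (ecat_of_dcat C) a b = dhom C a b"
  by (simp_all add: ecat_of_dcat_def dhom_def ehom_def)

lemma eM_ecat_of_dcat:
  "a \<in> dOb C \<Longrightarrow> b \<in> dOb C \<Longrightarrow> c \<in> dOb C \<Longrightarrow>
   eM (ecat_of_dcat C) a b c = tensor_lift (dhom C b c) (dhom C a b) (dhom C a c) (dComp C a b c)"
  by (simp add: ecat_of_dcat_def)

lemma
  assumes C: "is_dcat C" and obj: "a \<in> dOb C" "b \<in> dOb C" "c \<in> dOb C"
  shows convex_map_dcat_comp_lift: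
      "convex_map (tensor (dhom C b c) (dhom C a b)) (dhom C a c) (eM (ecat_of_dcat C) a b c)"
    and dcat_comp_lift_tens: "\<And>g f. g \<in> dHom C b c \<Longrightarrow> f \<in> dHom C a b \<Longrightarrow>
      eM (ecat_of_dcat C) a b c (tens (dhom C b c) (dhom C a b) g f) = dComp C a b c g f"
  unfolding eM_ecat_of_dcat[OF obj]
  using dcat_hom_convex[OF C] dcat_comp_biconvex[OF C obj] obj
  by (simp_all add: convex_map_tensor_lift tensor_lift_tens)

lemma dcat_unit_convex_map: "is_dcat C \<Longrightarrow> a \<in> dOb C \<Longrightarrow> convex_map X (dhom C a a) (\<lambda>_. dId C a)"
  by (rule convex_map_const[OF dcat_hom_convex]) (simp_all add: dcat_id_in)

lemma dcat_comp_lift_assoc: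
  assumes C: "is_dcat C" and obj: "a \<in> dOb C" "b \<in> dOb C" "c \<in> dOb C" "d \<in> dOb C"
    and t: "t \<in> carr (tensor (tensor (dhom C c d) (dhom C b c)) (dhom C a b))"
  shows "eM (ecat_of_dcat C) a b d (tmap (tensor (dhom C c d) (dhom C b c)) (dhom C a b) (dhom C b d) (dhom C a b)
           (eM (ecat_of_dcat C) b c d) (idm (dhom C a b)) t)
       = eM (ecat_of_dcat C) a c d (tmap (dhom C c d) (tensor (dhom C b c) (dhom C a b)) (dhom C c d) (dhom C a c)
           (idm (dhom C c d)) (eM (ecat_of_dcat C) a b c) (assocm (dhom C c d) (dhom C b c) (dhom C a b) t))"
proof -
  let ?X1 = "dhom C c d" and ?X2 = "dhom C b c" and ?X3 = "dhom C a b" and ?M = "eM (ecat_of_dcat C)"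
  note H = dcat_hom_convex[OF C] and M = convex_map_dcat_comp_lift[OF C]
  have X1: "convex_set ?X1" and X2: "convex_set ?X2" and X3: "convex_set ?X3"
    using H obj by simp_all
  note X12 = convex_set_tensor[OF X1 X2] and X23 = convex_set_tensor[OF X2 X3]
  note left = tmap_tens[OF X12 X3 H[OF obj(2,4)] X3 M[OF obj(2-4)] convex_map_idm[OF X3]]
  note right = tmap_tens[OF X1 X23 X1 H[OF obj(1,3)] convex_map_idm[OF X1] M[OF obj(1-3)]]
  show ?thesis
  proof (rule convex_maps_tensor3_eqI[OF X1 X2 X3 _ _ _ t])
    show "convex_map (tensor (tensor ?X1 ?X2) ?X3) (dhom C a d)
        (\<lambda>t. ?M a b d (tmap (tensor ?X1 ?X2) ?X3 (dhom C b d) ?X3 (?M b c d) (idm ?X3) t))"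
      by (rule convex_map_comp[OF convex_map_tmap[OF X12 X3 H[OF obj(2,4)] X3 M[OF obj(2-4)]
            convex_map_idm[OF X3]] M[OF obj(1,2,4)]])
    show "convex_map (tensor (tensor ?X1 ?X2) ?X3) (dhom C a d)
        (\<lambda>t. ?M a c d (tmap ?X1 (tensor ?X2 ?X3) ?X1 (dhom C a c) (idm ?X1) (?M a b c) (assocm ?X1 ?X2 ?X3 t)))"
      by (rule convex_map_comp[OF convex_map_assocm[OF X1 X2 X3] convex_map_comp[OF convex_map_tmap[OF
            X1 X23 X1 H[OF obj(1,3)] convex_map_idm[OF X1] M[OF obj(1-3)]] M[OF obj(1,3,4)]]])
    fix h g f assume h: "h \<in> carr ?X1" and g: "g \<in> carr ?X2" and f: "f \<in> carr ?X3"
    then have hgf: "h \<in> dHom C c d" "g \<in> dHom C b c" "f \<in> dHom C a b" by simp_all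
    have "?M a b d (tmap (tensor ?X1 ?X2) ?X3 (dhom C b d) ?X3 (?M b c d) (idm ?X3)
            (tens (tensor ?X1 ?X2) ?X3 (tens ?X1 ?X2 h g) f))
        = dComp C a b d (dComp C b c d h g) f"
      using left[OF tens_in[OF h g] f] f hgf obj
      by (simp add: idm_def dcat_comp_lift_tens[OF C] dcat_comp_in[OF C])
    also have "\<dots> = dComp C a c d h (dComp C a b c g f)"
      by (rule dcat_assoc[OF C obj hgf(3,2,1), symmetric])
    also have "\<dots> = ?M a c d (tmap ?X1 (tensor ?X2 ?X3) ?X1 (dhom C a c) (idm ?X1) (?M a b c)
            (assocm ?X1 ?X2 ?X3 (tens (tensor ?X1 ?X2) ?X3 (tens ?X1 ?X2 h g) f)))"
      using assocm_tens[OF X1 X2 X3 h g f] right[OF h tens_in[OF g f]] h hgf obj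
      by (simp add: idm_def dcat_comp_lift_tens[OF C] dcat_comp_in[OF C])
    finally show "?M a b d (tmap (tensor ?X1 ?X2) ?X3 (dhom C b d) ?X3 (?M b c d) (idm ?X3)
            (tens (tensor ?X1 ?X2) ?X3 (tens ?X1 ?X2 h g) f))
        = ?M a c d (tmap ?X1 (tensor ?X2 ?X3) ?X1 (dhom C a c) (idm ?X1) (?M a b c)
            (assocm ?X1 ?X2 ?X3 (tens (tensor ?X1 ?X2) ?X3 (tens ?X1 ?X2 h g) f)))" .
  qed
qed

lemma dcat_comp_lift_unit_left:
  assumes C: "is_dcat C" and a: "a \<in> dOb C" and b: "b \<in> dOb C"
    and t: "t \<in> carr (tensor unitC (dhom C a b))"
  shows "eM (ecat_of_dcat C) a b b (tmap unitC (dhom C a b) (dhom C b b) (dhom C a b) (\<lambda>_. dId C b)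
           (idm (dhom C a b)) t) = lunit (dhom C a b) t"
proof -
  let ?A = "dhom C a b" and ?B = "dhom C b b"
  have A: "convex_set ?A" by (rule dcat_hom_convex[OF C a b])
  note T = convex_map_tmap tmap_tens
  note T = T[OF convex_set_unitC A dcat_hom_convex[OF C b b] A dcat_unit_convex_map[OF C b] convex_map_idm[OF A]]
  show ?thesis
  proof (rule convex_maps_tensor_eqI[OF convex_set_unitC A
        convex_map_comp[OF T(1) convex_map_dcat_comp_lift[OF C a b b]] convex_map_lunit[OF A] _ t])
    fix u f assume "u \<in> carr unitC" and f: "f \<in> carr ?A"
    then show "eM (ecat_of_dcat C) a b b (tmap unitC ?A ?B ?A (\<lambda>_. dId C b) (idm ?A) (tens unitC ?A u f))
        = lunit ?A (tens unitC ?A u f)"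
      using T(2) lunit_tens[OF A f] f
      by (simp add: idm_def dcat_comp_lift_tens[OF C a b b] dcat_id_in[OF C b] dcat_id_left[OF C a b])
  qed
qed

lemma dcat_comp_lift_unit_right:
  assumes C: "is_dcat C" and a: "a \<in> dOb C" and b: "b \<in> dOb C"
    and t: "t \<in> carr (tensor (dhom C a b) unitC)"
  shows "eM (ecat_of_dcat C) a a b (tmap (dhom C a b) unitC (dhom C a b) (dhom C a a) (idm (dhom C a b))
           (\<lambda>_. dId C a) t) = runit (dhom C a b) t"
proof -
  let ?A = "dhom C a b" and ?B = "dhom C a a"
  have A: "convex_set ?A" by (rule dcat_hom_convex[OF C a b])
  note T = convex_map_tmap tmap_tens
  note T = T[OF A convex_set_unitC A dcat_hom_convex[OF C a a] convex_map_idm[OF A] dcat_unit_convex_map[OF C a]]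
  show ?thesis
  proof (rule convex_maps_tensor_eqI[OF A convex_set_unitC
        convex_map_comp[OF T(1) convex_map_dcat_comp_lift[OF C a a b]] convex_map_runit[OF A] _ t])
    fix f u assume f: "f \<in> carr ?A" and "u \<in> carr unitC"
    then show "eM (ecat_of_dcat C) a a b (tmap ?A unitC ?A ?B (idm ?A) (\<lambda>_. dId C a) (tens ?A unitC f u))
        = runit ?A (tens ?A unitC f u)"
      using T(2) runit_tens[OF A f] f
      by (simp add: idm_def dcat_comp_lift_tens[OF C a a b] dcat_id_in[OF C a] dcat_id_right[OF C a b])
  qed
qed

lemma is_ecat_ecat_of_dcat:
  assumes C: "is_dcat C"
  shows "is_ecat (ecat_of_dcat C)"
proof (rule is_ecatI, unfold ecat_of_dcat_simps)
  fix a b c t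
  assume "\<not> (a \<in> dOb C \<and> b \<in> dOb C \<and> c \<in> dOb C \<and> t \<in> carr (tensor (dhom C b c) (dhom C a b)))"
  then show "eM (ecat_of_dcat C) a b c t = undefined"
    using tensor_lift_extensional[OF dcat_hom_convex[OF C] dcat_hom_convex[OF C] dcat_hom_convex[OF C]
        dcat_comp_biconvex[OF C]]
    by (cases "a \<in> dOb C \<and> b \<in> dOb C \<and> c \<in> dOb C") (auto simp: ecat_of_dcat_def extensional_def)
qed (simp_all add: C dcat_hom_convex convex_map_dcat_comp_lift dcat_unit_convex_map dcat_id_undefined
       dcat_comp_lift_assoc dcat_comp_lift_unit_left dcat_comp_lift_unit_right)

lemma dcat_of_ecat_of_dcat:
  assumes C: "is_dcat C"
  shows "dcat_of_ecat (ecat_of_dcat C) = C"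
proof (rule dcat.equality)
  show "dComp (dcat_of_ecat (ecat_of_dcat C)) = dComp C"
  proof (intro ext)
    fix a b c g f
    show "dComp (dcat_of_ecat (ecat_of_dcat C)) a b c g f = dComp C a b c g f"
    proof (cases "a \<in> dOb C \<and> b \<in> dOb C \<and> c \<in> dOb C \<and> g \<in> dHom C b c \<and> f \<in> dHom C a b")
      case True
      then show ?thesis by (simp add: dComp_dcat_of_ecat dcat_comp_lift_tens[OF C])
    next
      case False
      then show ?thesis using dcat_comp_undefined[OF C False] by (auto simp: dcat_of_ecat_def)
    qed
  qed
qed (simp_all add: dcat_of_ecat_def)

lemma ecat_of_dcat_of_ecat:
  assumes E: "is_ecat E"
  shows "ecat_of_dcat (dcat_of_ecat E) = E"
proof (rule ecat.equality)
  show "eM (ecat_of_dcat (dcat_of_ecat E)) = eM E"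
  proof (intro ext)
    fix a b c t
    show "eM (ecat_of_dcat (dcat_of_ecat E)) a b c t = eM E a b c t"
    proof (cases "a \<in> eOb E \<and> b \<in> eOb E \<and> c \<in> eOb E")
      case True
      then have obj: "a \<in> eOb E" "b \<in> eOb E" "c \<in> eOb E" by simp_all
      have "eM E a b c \<in> extensional (carr (tensor (ehom E b c) (ehom E a b)))"
        unfolding extensional_def using ecat_comp_undefined[OF E] by blast
      then have "tensor_lift (ehom E b c) (ehom E a b) (ehom E a c) (dComp (dcat_of_ecat E) a b c) = eM E a b c"
        using obj
        by (intro tensor_lift_unique[OF ecat_hom_convex[OF E] ecat_hom_convex[OF E] ecat_hom_convex[OF E]
              biconvex_ecat_comp_tens[OF E] ecat_comp_convex[OF E]])
           (simp_all add: dComp_dcat_of_ecat)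
      then show ?thesis using obj by (simp add: eM_ecat_of_dcat)
    next
      case False
      then show ?thesis using ecat_comp_undefined[OF E, of a b c t] by (auto simp: ecat_of_dcat_def)
    qed
  qed
  show "eJ (ecat_of_dcat (dcat_of_ecat E)) = eJ E"
    by (intro ext) simp
qed (simp_all add: ecat_of_dcat_def)

lemma is_dfun_dcat_of_ecat:
  assumes E: "is_ecat E" and E': "is_ecat E'" and F: "is_efun E E' Fo Fh"
  shows "is_dfun (dcat_of_ecat E) (dcat_of_ecat E') Fo Fh"
  unfolding is_dfun_def dcat_of_ecat_simps
proof (intro conjI ballI allI impI)
  note H = ecat_hom_convex[OF E] and H' = ecat_hom_convex[OF E'] and FO = efun_obj_in[OF F]
  fix a b c g f assume obj: "a \<in> eOb E" "b \<in> eOb E" "c \<in> eOb E" and g: "g \<in> eHom E b c" and f: "f \<in> eHom E a b"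
  have Fg: "Fh b c g \<in> eHom E' (Fo b) (Fo c)" and Ff: "Fh a b f \<in> eHom E' (Fo a) (Fo b)"
    using convex_map_in[OF efun_convex_map[OF F obj(2,3)], of g] convex_map_in[OF efun_convex_map[OF F obj(1,2)], of f]
      f g by simp_all
  show "Fh a c (dComp (dcat_of_ecat E) a b c g f)
      = dComp (dcat_of_ecat E') (Fo a) (Fo b) (Fo c) (Fh b c g) (Fh a b f)"
    using efun_comp[OF F obj tens_in[of g _ f]] f g Fg Ff obj FO
      tmap_tens[OF H[OF obj(2,3)] H[OF obj(1,2)] H'[OF FO[OF obj(2)] FO[OF obj(3)]] H'[OF FO[OF obj(1)] FO[OF obj(2)]]
        efun_convex_map[OF F obj(2,3)] efun_convex_map[OF F obj(1,2)], of g f]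
    by (simp add: dComp_dcat_of_ecat)
qed (use F in \<open>auto simp: efun_obj_in efun_convex_map efun_unit efun_obj_undefined efun_hom_undefined
        intro: convex_map_in[OF efun_convex_map[OF F], simplified]\<close>)

lemma is_efun_of_is_dfun:
  assumes E: "is_ecat E" and E': "is_ecat E'" and F: "is_dfun (dcat_of_ecat E) (dcat_of_ecat E') Fo Fh"
  shows "is_efun E E' Fo Fh"
  unfolding is_efun_def
proof (intro conjI ballI allI impI)
  note H = ecat_hom_convex[OF E] and H' = ecat_hom_convex[OF E']
  have FO: "\<And>a. a \<in> eOb E \<Longrightarrow> Fo a \<in> eOb E'" using dfun_obj_in[OF F] by simp
  have FC: "\<And>a b. a \<in> eOb E \<Longrightarrow> b \<in> eOb E \<Longrightarrow> convex_map (ehom E a b) (ehom E' (Fo a) (Fo b)) (Fh a b)"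
    using dfun_convex_map[OF F] by simp
  fix a b c t assume obj: "a \<in> eOb E" "b \<in> eOb E" "c \<in> eOb E"
    and t: "t \<in> carr (tensor (ehom E b c) (ehom E a b))"
  note Fobj = FO[OF obj(1)] FO[OF obj(2)] FO[OF obj(3)]
  note T = convex_map_tmap tmap_tens
  note T = T[OF H[OF obj(2,3)] H[OF obj(1,2)] H'[OF Fobj(2,3)] H'[OF Fobj(1,2)] FC[OF obj(2,3)] FC[OF obj(1,2)]]
  show "Fh a c (eM E a b c t) = eM E' (Fo a) (Fo b) (Fo c)
      (tmap (ehom E b c) (ehom E a b) (ehom E' (Fo b) (Fo c)) (ehom E' (Fo a) (Fo b)) (Fh b c) (Fh a b) t)"
  proof (rule convex_maps_tensor_eqI[OF H[OF obj(2,3)] H[OF obj(1,2)]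
        convex_map_comp[OF ecat_comp_convex[OF E obj] FC[OF obj(1,3)]]
        convex_map_comp[OF T(1) ecat_comp_convex[OF E' Fobj]] _ t])
    fix g f assume g: "g \<in> carr (ehom E b c)" and f: "f \<in> carr (ehom E a b)"
    then show "Fh a c (eM E a b c (tens (ehom E b c) (ehom E a b) g f))
        = eM E' (Fo a) (Fo b) (Fo c) (tmap (ehom E b c) (ehom E a b) (ehom E' (Fo b) (Fo c)) (ehom E' (Fo a) (Fo b))
            (Fh b c) (Fh a b) (tens (ehom E b c) (ehom E a b) g f))"
      using dfun_comp[OF F, of a b c g f] T(2)[OF g f] obj Fobj
        convex_map_in[OF FC[OF obj(2,3)] g] convex_map_in[OF FC[OF obj(1,2)] f]
      by (simp add: dComp_dcat_of_ecat)
  qed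
qed (use dfun_obj_in[OF F] dfun_convex_map[OF F] dfun_id[OF F] dfun_obj_undefined[OF F]
      dfun_hom_undefined[OF F] in auto)

definition on_arrows :: "('a \<Rightarrow> 'b) \<Rightarrow> 'a \<times> ('o \<Rightarrow> 'o) \<times> ('o \<Rightarrow> 'o \<Rightarrow> 'h \<Rightarrow> 'h) \<times> 'a
    \<Rightarrow> 'b \<times> ('o \<Rightarrow> 'o) \<times> ('o \<Rightarrow> 'o \<Rightarrow> 'h \<Rightarrow> 'h) \<times> 'b" where
  "on_arrows T = (\<lambda>(A, Fo, Fh, A'). (T A, Fo, Fh, T A'))"

lemma is_functor_dcat_of_ecat: "is_functor CSetCat CatD dcat_of_ecat (on_arrows dcat_of_ecat)"
  unfolding is_functor_def
proof (intro conjI ballI impI)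
  fix F assume "F \<in> cAr CSetCat"
  then obtain E Fo Fh E' where "F = (E, Fo, Fh, E')" "is_ecat E" "is_ecat E'" "is_efun E E' Fo Fh"
    by (auto simp: CSetCat_def)
  then show "on_arrows dcat_of_ecat F \<in> cAr CatD"
    by (simp add: on_arrows_def CatD_def is_dcat_dcat_of_ecat is_dfun_dcat_of_ecat)
qed (auto simp: CSetCat_def CatD_def on_arrows_def is_dcat_dcat_of_ecat)

lemma is_functor_ecat_of_dcat: "is_functor CatD CSetCat ecat_of_dcat (on_arrows ecat_of_dcat)"
  unfolding is_functor_def
proof (intro conjI ballI impI)
  fix F assume "F \<in> cAr CatD"
  then obtain C Fo Fh C' where F: "F = (C, Fo, Fh, C')" and C: "is_dcat C" "is_dcat C'"
    and "is_dfun C C' Fo Fh"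
    by (auto simp: CatD_def)
  then have "is_dfun (dcat_of_ecat (ecat_of_dcat C)) (dcat_of_ecat (ecat_of_dcat C')) Fo Fh"
    by (simp add: dcat_of_ecat_of_dcat)
  then show "on_arrows ecat_of_dcat F \<in> cAr CSetCat"
    using C by (simp add: F on_arrows_def CSetCat_def is_ecat_ecat_of_dcat is_efun_of_is_dfun)
qed (auto simp: CSetCat_def CatD_def on_arrows_def is_ecat_ecat_of_dcat)

theorem mainTheorem4:
  shows "cat_iso (CSetCat :: (('o, 'h) ecat, _) bigcat) (CatD :: (('o, 'h) dcat, _) bigcat)"
  unfolding cat_iso_def
proof (intro exI conjI)
  show "is_functor CSetCat CatD dcat_of_ecat (on_arrows dcat_of_ecat)"
    by (rule is_functor_dcat_of_ecat)
  show "is_functor CatD CSetCat ecat_of_dcat (on_arrows ecat_of_dcat)"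
    by (rule is_functor_ecat_of_dcat)
qed (auto simp: CSetCat_def CatD_def on_arrows_def ecat_of_dcat_of_ecat dcat_of_ecat_of_dcat)

end
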